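(* Let $\alpha\in[0,1)$ and $\delta,\epsilon\in(0,\infty)$. There exists $C_{\alpha,\delta,\epsilon}(T)\in(0,\infty)$ such that for all $M\in\mathbb N$, all $x\in H_M$, all $h\in H_M\setminus\{0\}$ and all $0\le s<t\le T$, almost surely, \[\frac{\|\Pi_M(t,s)h\|_{L^2}}{\|(-A)^{-\alpha}h\|_{L^2}}\le\frac{C_{\alpha,\delta,\epsilon}(T)}{(t-s)^\alpha}\exp\Bigl(\epsilon\int_s^t\|\nabla X_M^x(r)\|_{L^2}^2dr\Bigr)\Bigl(\sup_{r\in[s,t]}\|(-A)^{\frac14+\delta}X_M^x(r)\|_{L^2}^2+1\Bigr).\]
   Context: $T\in(0,\infty)$ fixed. $L^2=L^2(0,1)$ (real); $\nabla$ is the derivative on $(0,1)$. With $h_k=\sqrt2\sin(k\pi\cdot)$, $A$ is the Dirichlet Laplacian $Ax=-\sum_k(\pi k)^2\langle x,h_k\rangle_{L^2}h_k$ and for real $\alpha$, $(-A)^{\alpha}x=\sum_k(\pi k)^{2\alpha}\langle x,h_k\rangle_{L^2}h_k$. $H_M=\mathrm{span}(h_1,\dots,h_M)$, $P_M$ the orthogonal projection onto $H_M$. $B[x_1,x_2]=x_1\nabla x_2+x_2\nabla x_1$, $B_M[x_1,x_2]=P_MB[P_Mx_1,P_Mx_2]$, $B_M(x)=B_M[x,x]$. $Q$ is a positive self-adjoint trace-class operator on $L^2$ with eigenbasis $(e_k)$, eigenvalues $(q_k)$; $W^Q(t)=\sum_k\sqrt{q_k}W^{(k)}(t)e_k$ with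 independent standard Brownian motions $W^{(k)}$. For $x\in H_M$, $X_M^x$ is the unique $H_M$-valued continuous adapted process with $X_M^x(t)=x+\int_0^t[AX_M^x(r)+B_M(X_M^x(r))]dr+P_MW^Q(t)$. For $s\ge0$ and $h\in H_M$, $\eta_M^h(\cdot|s)$ is the (pathwise) solution on $[s,\infty)$ of $\frac{d}{dt}\eta_M^h(t|s)=A\eta_M^h(t|s)+2B_M[X_M^x(t),\eta_M^h(t|s)]$, $\eta_M^h(s|s)=h$, and $\Pi_M(t,s)h=\eta_M^h(t|s)$. *)

theory Defs
  imports "HOL-Probability.Probability"
begin

text \<open>Real L^2(0,1): elements are represented by functions real => real;
 inner product and norm are the Lebesgue/Henstock integrals over [0,1].\<close>

definition L2fun :: "(real \<Rightarrow> real) \<Rightarrow> bool" where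
  "L2fun f \<longleftrightarrow> f measurable_on {0..1} \<and> (\<lambda>y. (f y)^2) integrable_on {0..1}"

definition L2inner :: "(real \<Rightarrow> real) \<Rightarrow> (real \<Rightarrow> real) \<Rightarrow> real" where
  "L2inner f g = integral {0..1} (\<lambda>y. f y * g y)"

definition L2norm :: "(real \<Rightarrow> real) \<Rightarrow> real" where
  "L2norm f = sqrt (L2inner f f)"

text \<open>Sine basis h_k = sqrt 2 sin(k pi .), k >= 1 (h_0 = 0 is never used as a basis vector).\<close>

definition hb :: "nat \<Rightarrow> real \<Rightarrow> real" where
  "hb k y = sqrt 2 * sin (real k * pi * y)"

definition HM :: "nat \<Rightarrow> (real \<Rightarrow> real) set" where
  "HM M = {f. \<exists>c::nat \<Rightarrow> real. f = (\<lambda>y. \<Sum>k\<in>{1..M}. c k * hb k y)}"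

definition PM :: "nat \<Rightarrow> (real \<Rightarrow> real) \<Rightarrow> (real \<Rightarrow> real)" where
  "PM M f = (\<lambda>y. \<Sum>k\<in>{1..M}. L2inner f (hb k) * hb k y)"

definition Adir :: "(real \<Rightarrow> real) \<Rightarrow> (real \<Rightarrow> real)" where
  "Adir f = (\<lambda>y. - (\<Sum>k. (pi * real k)^2 * L2inner f (hb k) * hb k y))"

definition fracA :: "real \<Rightarrow> (real \<Rightarrow> real) \<Rightarrow> (real \<Rightarrow> real)" where
  "fracA a f = (\<lambda>y. \<Sum>k. (pi * real k) powr (2 * a) * L2inner f (hb k) * hb k y)"

definition grad :: "(real \<Rightarrow> real) \<Rightarrow> (real \<Rightarrow> real)" where
  "grad f = (\<lambda>y. deriv f y)"

definition Bnl :: "(real \<Rightarrow> real) \<Rightarrow> (real \<Rightarrow> real) \<Rightarrow> (real \<Rightarrow> real)" where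
  "Bnl x1 x2 = (\<lambda>y. x1 y * grad x2 y + x2 y * grad x1 y)"

definition BM :: "nat \<Rightarrow> (real \<Rightarrow> real) \<Rightarrow> (real \<Rightarrow> real) \<Rightarrow> (real \<Rightarrow> real)" where
  "BM M x1 x2 = PM M (Bnl (PM M x1) (PM M x2))"

definition indep_std_BMs :: "'w measure \<Rightarrow> (nat \<Rightarrow> real \<Rightarrow> 'w \<Rightarrow> real) \<Rightarrow> bool" where
  "indep_std_BMs P W \<longleftrightarrow> prob_space P \<and>
    (\<forall>k t. W k t \<in> borel_measurable P) \<and>
    (\<forall>k. AE \<omega> in P. W k 0 \<omega> = 0 \<and> continuous_on {0..} (\<lambda>t. W k t \<omega>)) \<and>
    (\<forall>k s t. 0 \<le> s \<and> s < t \<longrightarrow>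
        distributed P lborel (\<lambda>\<omega>. W k t \<omega> - W k s \<omega>)
          (\<lambda>z. ennreal (normal_density 0 (sqrt (t - s)) z))) \<and>
    (\<forall>k n (\<tau>::nat \<Rightarrow> real). 0 \<le> \<tau> 0 \<and> (\<forall>i<n. \<tau> i < \<tau> (Suc i)) \<longrightarrow>
        prob_space.indep_vars P (\<lambda>_. borel) (\<lambda>i \<omega>. W k (\<tau> (Suc i)) \<omega> - W k (\<tau> i) \<omega>) {..<n}) \<and>
    prob_space.indep_vars P (\<lambda>_. PiM UNIV (\<lambda>_::real. borel)) (\<lambda>k \<omega>. (\<lambda>t. W k t \<omega>)) UNIV"

text \<open>Q positive self-adjoint trace class, given by orthonormal eigenbasis e and eigenvalues q.\<close>

definition trace_class_eigen :: "(nat \<Rightarrow> real \<Rightarrow> real) \<Rightarrow> (nat \<Rightarrow> real) \<Rightarrow> bool" where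
  "trace_class_eigen e q \<longleftrightarrow>
    (\<forall>k. L2fun (e k)) \<and>
    (\<forall>j k. L2inner (e j) (e k) = (if j = k then 1 else 0)) \<and>
    (\<forall>f. L2fun f \<and> (\<forall>k. L2inner f (e k) = 0) \<longrightarrow> L2inner f f = 0) \<and>
    (\<forall>k. 0 \<le> q k) \<and> summable q"

definition PMWQ :: "nat \<Rightarrow> (nat \<Rightarrow> real \<Rightarrow> real) \<Rightarrow> (nat \<Rightarrow> real) \<Rightarrow> (nat \<Rightarrow> real \<Rightarrow> 'w \<Rightarrow> real)
    \<Rightarrow> real \<Rightarrow> 'w \<Rightarrow> (real \<Rightarrow> real)" where
  "PMWQ M e q W t \<omega> = (\<lambda>y. \<Sum>k. sqrt (q k) * W k t \<omega> * PM M (e k) y)"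

text \<open>Continuity of an H_M-valued path (H_M finite dimensional: continuity of the coordinates).\<close>

definition HM_path_cont :: "nat \<Rightarrow> real set \<Rightarrow> (real \<Rightarrow> real \<Rightarrow> real) \<Rightarrow> bool" where
  "HM_path_cont M S Y \<longleftrightarrow> (\<forall>t\<in>S. Y t \<in> HM M) \<and>
     (\<forall>k\<in>{1..M}. continuous_on S (\<lambda>t. L2inner (Y t) (hb k)))"

definition galerkin_solution :: "nat \<Rightarrow> (nat \<Rightarrow> real \<Rightarrow> real) \<Rightarrow> (nat \<Rightarrow> real) \<Rightarrow>
    (nat \<Rightarrow> real \<Rightarrow> 'w \<Rightarrow> real) \<Rightarrow> (real \<Rightarrow> real) \<Rightarrow> (real \<Rightarrow> 'w \<Rightarrow> (real \<Rightarrow> real)) \<Rightarrow> 'w \<Rightarrow> bool" where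
  "galerkin_solution M e q W x X \<omega> \<longleftrightarrow>
     HM_path_cont M {0..} (\<lambda>t. X t \<omega>) \<and>
     (\<forall>t\<ge>0. X t \<omega> = (\<lambda>y. x y
        + integral {0..t} (\<lambda>r. Adir (X r \<omega>) y + BM M (X r \<omega>) (X r \<omega>) y)
        + PMWQ M e q W t \<omega> y))"

definition linearized_solution :: "nat \<Rightarrow> (real \<Rightarrow> (real \<Rightarrow> real)) \<Rightarrow> real \<Rightarrow> (real \<Rightarrow> real)
    \<Rightarrow> (real \<Rightarrow> (real \<Rightarrow> real)) \<Rightarrow> bool" where
  "linearized_solution M Xp s h \<eta> \<longleftrightarrow>
     HM_path_cont M {s..} \<eta> \<and> \<eta> s = h \<and>
     (\<forall>t\<ge>s. \<forall>k\<in>{1..M}.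
        ((\<lambda>\<tau>. L2inner (\<eta> \<tau>) (hb k)) has_real_derivative
           L2inner (\<lambda>y. Adir (\<eta> t) y + 2 * BM M (Xp t) (\<eta> t) y) (hb k)) (at t within {s..}))"

end

(*
  In the sine coordinates of H_M the linearised equation reads
  c_k' = -(pi k)^2 c_k + 2 <B[X, eta], h_k>.  By Duhamel's formula, the smoothing
  |e^{sigma A} (-A)^alpha| <= sigma^{-alpha} of the heat semigroup, and the bound
  |e^{sigma A} B[X, eta]| <= C sigma^{-1/2} |X|_oo |eta| (integration by parts plus Bessel's
  inequality for the cosines), the quantity phi = sup_{s < r <= s + tau} (r - s)^alpha |eta(r)|
  satisfies phi <= |(-A)^{-alpha} h| + c_alpha |X|_oo sqrt(tau) phi; for tau ~ |X|_oo^{-2} this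
  closes to phi <= 2 |(-A)^{-alpha} h|.  The sup norm of X is controlled by
  |(-A)^{1/4 + delta} X| through a Cauchy-Schwarz argument on the coefficients.  After time
  s + tau, the energy inequality d/dt |eta|^2 <= (eps |grad X|^2 + eps^{-2}) |eta|^2, which
  follows from Agmon's inequality, and Gronwall's lemma propagate the bound; the price
  tau^{-alpha} <= tau^{-1} of the short-time step is the factor
  sup |(-A)^{1/4 + delta} X|^2 + 1.
*)
theory Submission
  imports Defs
begin

section \<open>Sine and cosine bases\<close>

definition hcos :: "nat \<Rightarrow> real \<Rightarrow> real" where
  "hcos k y = sqrt 2 * cos (real k * pi * y)"

definition eigval :: "nat \<Rightarrow> real" where
  "eigval k = (pi * real k)^2"

lemma eigval_nonneg [simp]: "0 \<le> eigval k"
  by (simp add: eigval_def)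

lemma has_integral_cos_int_pi:
  fixes m :: int
  shows "((\<lambda>y. cos (of_int m * pi * y)) has_integral (if m = 0 then 1 else 0)) {0..1}"
proof (cases "m = 0")
  case False
  have "((\<lambda>y. sin (of_int m * pi * y) / (of_int m * pi)) has_vector_derivative cos (of_int m * pi * y))
      (at y within {0..1})" for y
    using False
    by (auto intro!: derivative_eq_intros simp: has_real_derivative_iff_has_vector_derivative[symmetric])
  then have "((\<lambda>y. cos (of_int m * pi * y)) has_integral
      sin (of_int m * pi * 1) / (of_int m * pi) - sin (of_int m * pi * 0) / (of_int m * pi)) {0..1}"
    by (intro fundamental_theorem_of_calculus) auto
  moreover have "sin (of_int m * pi) = 0"
    by (metis sin_zero_iff_int2 Ints_of_int)
  ultimately show ?thesis using False by simp
qed (use has_integral_const_real[of "1::real" 0 1] in simp)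

lemma integral_hb_hb: "integral {0..1} (\<lambda>y. hb j y * hb k y) = (if j = k \<and> k \<ge> 1 then 1 else 0)"
proof -
  have "hb j y * hb k y = cos (of_int (int j - int k) * pi * y) - cos (of_int (int j + int k) * pi * y)" for y
    unfolding hb_def by (simp add: cos_diff cos_add algebra_simps)
  moreover have "((\<lambda>y. cos (of_int (int j - int k) * pi * y) - cos (of_int (int j + int k) * pi * y))
      has_integral (if int j - int k = 0 then 1 else 0) - (if int j + int k = 0 then 1 else 0)) {0..1}"
    by (intro has_integral_diff has_integral_cos_int_pi)
  ultimately show ?thesis by (auto dest!: integral_unique)
qed

lemma integral_hcos_hcos:
  assumes "j \<ge> 1" "k \<ge> 1"
  shows "integral {0..1} (\<lambda>y. hcos j y * hcos k y) = (if j = k then 1 else 0)"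
proof -
  have "hcos j y * hcos k y = cos (of_int (int j - int k) * pi * y) + cos (of_int (int j + int k) * pi * y)" for y
    unfolding hcos_def by (simp add: cos_diff cos_add algebra_simps)
  moreover have "((\<lambda>y. cos (of_int (int j - int k) * pi * y) + cos (of_int (int j + int k) * pi * y))
      has_integral (if int j - int k = 0 then 1 else 0) + (if int j + int k = 0 then 1 else 0)) {0..1}"
    by (intro has_integral_add has_integral_cos_int_pi)
  ultimately show ?thesis using assms by (auto dest!: integral_unique)
qed

lemma continuous_on_hb [continuous_intros]: "continuous_on S (hb k)"
  unfolding hb_def by (intro continuous_intros)

lemma continuous_on_hcos [continuous_intros]: "continuous_on S (hcos k)"
  unfolding hcos_def by (intro continuous_intros)

lemma has_real_derivative_hb: "(hb k has_real_derivative (real k * pi) * hcos k y) (at y within S)"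
  unfolding hb_def hcos_def by (auto intro!: derivative_eq_intros simp: algebra_simps)

lemma hb_endpoints [simp]: "hb k 0 = 0" "hb k 1 = 0"
  by (auto simp: hb_def sin_zero_iff_int2)

lemma abs_hb_le: "\<bar>hb k y\<bar> \<le> sqrt 2"
  by (simp add: hb_def abs_mult)


section \<open>Finite sine series\<close>

definition sine_sum :: "nat \<Rightarrow> (nat \<Rightarrow> real) \<Rightarrow> real \<Rightarrow> real" where
  "sine_sum M c = (\<lambda>y. \<Sum>k\<in>{1..M}. c k * hb k y)"

definition sine_sum_deriv :: "nat \<Rightarrow> (nat \<Rightarrow> real) \<Rightarrow> real \<Rightarrow> real" where
  "sine_sum_deriv M c = (\<lambda>y. \<Sum>k\<in>{1..M}. c k * (real k * pi) * hcos k y)"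

lemma continuous_on_sine_sum [continuous_intros]: "continuous_on S (sine_sum M c)"
  unfolding sine_sum_def by (intro continuous_intros)

lemma continuous_on_sine_sum_deriv [continuous_intros]: "continuous_on S (sine_sum_deriv M c)"
  unfolding sine_sum_deriv_def by (intro continuous_intros)

lemma has_real_derivative_sine_sum:
  "(sine_sum M c has_real_derivative sine_sum_deriv M c y) (at y within S)"
  unfolding sine_sum_def sine_sum_deriv_def
  by (auto intro!: DERIV_sum has_real_derivative_hb[THEN DERIV_cmult, THEN DERIV_cong] simp: algebra_simps)

lemma grad_sine_sum: "grad (sine_sum M c) = sine_sum_deriv M c"
  unfolding grad_def using has_real_derivative_sine_sum[THEN DERIV_imp_deriv] by auto

lemma sine_sum_endpoints [simp]: "sine_sum M c 0 = 0" "sine_sum M c 1 = 0"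
  by (auto simp: sine_sum_def)

lemma sine_sum_cong: "(\<And>k. k \<in> {1..M} \<Longrightarrow> a k = b k) \<Longrightarrow> sine_sum M a = sine_sum M b"
  unfolding sine_sum_def by (auto intro!: sum.cong)

lemma integral_finite_sum_mult:
  fixes \<phi> :: "'k \<Rightarrow> real \<Rightarrow> real"
  assumes "finite S" and "continuous_on {a..b} g" and "\<And>k. k \<in> S \<Longrightarrow> continuous_on {a..b} (\<phi> k)"
  shows "integral {a..b} (\<lambda>y. (\<Sum>k\<in>S. d k * \<phi> k y) * g y) = (\<Sum>k\<in>S. d k * integral {a..b} (\<lambda>y. \<phi> k y * g y))"
proof -
  have "((\<lambda>y. \<Sum>k\<in>S. d k * (\<phi> k y * g y)) has_integral (\<Sum>k\<in>S. d k * integral {a..b} (\<lambda>y. \<phi> k y * g y))) {a..b}"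
    using assms
    by (intro has_integral_sum has_integral_mult_right integrable_integral integrable_continuous_interval
        continuous_on_mult) auto
  then show ?thesis by (simp add: sum_distrib_right mult.assoc integral_unique)
qed

lemma L2inner_sine_sum_left:
  "continuous_on {0..1} g \<Longrightarrow> L2inner (sine_sum M a) g = (\<Sum>k\<in>{1..M}. a k * L2inner (hb k) g)"
  unfolding L2inner_def sine_sum_def by (rule integral_finite_sum_mult) (auto intro: continuous_intros)

lemma L2inner_sine_sum_right:
  "continuous_on {0..1} g \<Longrightarrow> L2inner g (sine_sum M a) = (\<Sum>k\<in>{1..M}. a k * L2inner g (hb k))"
  using L2inner_sine_sum_left[of g M a] by (simp add: L2inner_def mult.commute)

lemma L2inner_sine_sum_hb: "L2inner (sine_sum M a) (hb k) = (if k \<in> {1..M} then a k else 0)"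
proof -
  have "L2inner (sine_sum M a) (hb k) = (\<Sum>j\<in>{1..M}. if j = k then a j else 0)"
    unfolding L2inner_sine_sum_left[OF continuous_on_hb]
    by (intro sum.cong) (auto simp: L2inner_def integral_hb_hb)
  then show ?thesis by simp
qed

lemma L2inner_sine_sum_hb' [simp]: "k \<in> {1..M} \<Longrightarrow> L2inner (sine_sum M a) (hb k) = a k"
  by (simp add: L2inner_sine_sum_hb)

lemma sine_sum_eq_0_iff: "sine_sum M a = (\<lambda>_. 0) \<longleftrightarrow> (\<forall>k\<in>{1..M}. a k = 0)"
proof
  assume "sine_sum M a = (\<lambda>_. 0)"
  then show "\<forall>k\<in>{1..M}. a k = 0"
    using L2inner_sine_sum_hb'[of _ M a] by (simp add: L2inner_def)
qed (simp add: sine_sum_def fun_eq_iff)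

lemma HM_iff_sine_sum: "f \<in> HM M \<longleftrightarrow> (\<exists>c. f = sine_sum M c)"
  by (auto simp: HM_def sine_sum_def)

lemma HM_eq_sine_sum_coeffs: "f \<in> HM M \<Longrightarrow> f = sine_sum M (\<lambda>k. L2inner f (hb k))"
  by (auto simp: HM_iff_sine_sum intro!: sine_sum_cong)

lemma L2inner_sine_sum: "L2inner (sine_sum M a) (sine_sum M b) = (\<Sum>k\<in>{1..M}. a k * b k)"
  by (simp add: L2inner_sine_sum_right continuous_on_sine_sum mult.commute)

lemma L2norm_sine_sum: "L2norm (sine_sum M a) = L2_set a {1..M}"
  by (simp add: L2norm_def L2_set_def L2inner_sine_sum power2_eq_square)

lemma L2inner_sine_sum_deriv:
  "L2inner (sine_sum_deriv M a) (sine_sum_deriv M b) = (\<Sum>k\<in>{1..M}. eigval k * a k * b k)"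
proof -
  have hcos_coeff: "L2inner (hcos j) (sine_sum_deriv M b) = b j * (real j * pi)" if j: "j \<in> {1..M}" for j
  proof -
    have "L2inner (hcos j) (sine_sum_deriv M b) = (\<Sum>k\<in>{1..M}. b k * (real k * pi) * L2inner (hcos k) (hcos j))"
      unfolding L2inner_def sine_sum_deriv_def
      by (subst mult.commute, subst integral_finite_sum_mult) (auto intro!: continuous_intros)
    also have "\<dots> = (\<Sum>k\<in>{1..M}. if k = j then b k * (real k * pi) else 0)"
      using j by (intro sum.cong) (auto simp: L2inner_def integral_hcos_hcos)
    finally show ?thesis using j by simp
  qed
  have "L2inner (sine_sum_deriv M a) (sine_sum_deriv M b)
      = (\<Sum>j\<in>{1..M}. a j * (real j * pi) * L2inner (hcos j) (sine_sum_deriv M b))"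
    unfolding L2inner_def sine_sum_deriv_def[of M a]
    by (subst integral_finite_sum_mult) (auto intro!: continuous_intros)
  also have "\<dots> = (\<Sum>k\<in>{1..M}. eigval k * a k * b k)"
    by (intro sum.cong) (auto simp: hcos_coeff eigval_def power2_eq_square)
  finally show ?thesis .
qed

lemma L2norm_grad_sine_sum_sq: "(L2norm (grad (sine_sum M a)))^2 = (\<Sum>k\<in>{1..M}. eigval k * (a k)^2)"
  unfolding L2norm_def grad_sine_sum L2inner_sine_sum_deriv
  by (simp add: sum_nonneg power2_eq_square mult.assoc)

lemma suminf_coeff_sine_sum:
  "(\<Sum>k. g k * L2inner (sine_sum M a) (hb k) * hb k y) = sine_sum M (\<lambda>k. g k * a k) y"
proof -
  have "(\<Sum>k. g k * L2inner (sine_sum M a) (hb k) * hb k y) = (\<Sum>k\<in>{1..M}. g k * L2inner (sine_sum M a) (hb k) * hb k y)"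
    by (rule suminf_finite) (auto simp: L2inner_sine_sum_hb)
  also have "\<dots> = (\<Sum>k\<in>{1..M}. g k * a k * hb k y)"
    by (intro sum.cong) auto
  finally show ?thesis by (simp add: sine_sum_def)
qed

lemma fracA_sine_sum: "fracA b (sine_sum M a) = sine_sum M (\<lambda>k. (pi * real k) powr (2 * b) * a k)"
  unfolding fracA_def by (simp add: suminf_coeff_sine_sum)

lemma Adir_sine_sum: "Adir (sine_sum M a) = sine_sum M (\<lambda>k. - eigval k * a k)"
proof -
  have "Adir (sine_sum M a) = (\<lambda>y. - sine_sum M (\<lambda>k. eigval k * a k) y)"
    unfolding Adir_def eigval_def by (simp add: suminf_coeff_sine_sum)
  then show ?thesis by (simp add: sine_sum_def fun_eq_iff sum_negf[symmetric])
qed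

lemma PM_eq_sine_sum: "PM M f = sine_sum M (\<lambda>k. L2inner f (hb k))"
  unfolding PM_def sine_sum_def ..

lemma PM_sine_sum [simp]: "PM M (sine_sum M a) = sine_sum M a"
  unfolding PM_eq_sine_sum by (rule sine_sum_cong) simp

lemma sine_sum_add_scaled: "(\<lambda>y. sine_sum M a y + c * sine_sum M b y) = sine_sum M (\<lambda>k. a k + c * b k)"
  by (simp add: sine_sum_def fun_eq_iff sum.distrib sum_distrib_left algebra_simps)


section \<open>The Burgers nonlinearity on sine series\<close>

lemma Bnl_sine_sum:
  "Bnl (sine_sum M a) (sine_sum M b) = (\<lambda>y. sine_sum M a y * sine_sum_deriv M b y + sine_sum M b y * sine_sum_deriv M a y)"
  unfolding Bnl_def grad_sine_sum ..

lemma continuous_on_Bnl_sine_sum [continuous_intros]: "continuous_on S (Bnl (sine_sum M a) (sine_sum M b))"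
  unfolding Bnl_sine_sum by (intro continuous_intros)

text \<open>Both identities below are integrations by parts; the boundary terms vanish because
  sine series vanish at 0 and 1.\<close>

lemma L2inner_Bnl_hb:
  "L2inner (Bnl (sine_sum M a) (sine_sum M b)) (hb k)
   = - (real k * pi) * integral {0..1} (\<lambda>y. sine_sum M a y * sine_sum M b y * hcos k y)"
proof -
  define X where "X = sine_sum M a"
  define E where "E = sine_sum M b"
  define P where "P = (\<lambda>y. (X y * sine_sum_deriv M b y + E y * sine_sum_deriv M a y) * hb k y)"
  define Q where "Q = (\<lambda>y. X y * E y * hcos k y)"
  have "((\<lambda>y. X y * E y * hb k y) has_vector_derivative (P y + (real k * pi) * Q y)) (at y within {0..1})" for y
    unfolding has_real_derivative_iff_has_vector_derivative[symmetric] P_def Q_def X_def E_def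
    by (auto intro!: derivative_eq_intros has_real_derivative_sine_sum has_real_derivative_hb simp: algebra_simps)
  then have "((\<lambda>y. P y + (real k * pi) * Q y) has_integral (X 1 * E 1 * hb k 1 - X 0 * E 0 * hb k 0)) {0..1}"
    by (intro fundamental_theorem_of_calculus) auto
  then have "((\<lambda>y. P y + (real k * pi) * Q y) has_integral 0) {0..1}" by simp
  moreover have "(Q has_integral integral {0..1} Q) {0..1}"
    unfolding Q_def X_def E_def by (intro integrable_integral integrable_continuous_interval continuous_intros)
  ultimately have "((\<lambda>y. (P y + (real k * pi) * Q y) - (real k * pi) * Q y)
      has_integral (0 - (real k * pi) * integral {0..1} Q)) {0..1}"
    by (intro has_integral_diff has_integral_mult_right)
  then have "integral {0..1} P = - (real k * pi) * integral {0..1} Q"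
    by (simp add: integral_unique)
  then show ?thesis unfolding L2inner_def Bnl_sine_sum P_def Q_def X_def E_def by simp
qed

lemma L2inner_Bnl_self:
  "L2inner (Bnl (sine_sum M a) (sine_sum M b)) (sine_sum M b)
   = (1/2) * integral {0..1} (\<lambda>y. sine_sum_deriv M a y * (sine_sum M b y)^2)"
proof -
  define X where "X = sine_sum M a"
  define E where "E = sine_sum M b"
  define P where "P = (\<lambda>y. X y * E y * sine_sum_deriv M b y)"
  define Q where "Q = (\<lambda>y. sine_sum_deriv M a y * (E y)^2)"
  have "((\<lambda>y. X y * (E y)^2) has_vector_derivative (2 * P y + Q y)) (at y within {0..1})" for y
    unfolding has_real_derivative_iff_has_vector_derivative[symmetric] P_def Q_def X_def E_def
    by (auto intro!: derivative_eq_intros has_real_derivative_sine_sum simp: algebra_simps power2_eq_square)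
  then have "((\<lambda>y. 2 * P y + Q y) has_integral (X 1 * (E 1)^2 - X 0 * (E 0)^2)) {0..1}"
    by (intro fundamental_theorem_of_calculus) auto
  then have "((\<lambda>y. 2 * P y + Q y) has_integral 0) {0..1}" by (simp add: X_def E_def)
  moreover have "(Q has_integral integral {0..1} Q) {0..1}"
    unfolding Q_def X_def E_def by (intro integrable_integral integrable_continuous_interval continuous_intros)
  ultimately have "((\<lambda>y. (1/2) * ((2 * P y + Q y) - Q y) + Q y)
      has_integral ((1/2) * (0 - integral {0..1} Q) + integral {0..1} Q)) {0..1}"
    by (intro has_integral_add has_integral_mult_right has_integral_diff)
  then have "integral {0..1} (\<lambda>y. P y + Q y) = (1/2) * integral {0..1} Q"
    by (simp add: integral_unique)
  moreover have "(\<lambda>y. Bnl X E y * E y) = (\<lambda>y. P y + Q y)"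
    unfolding X_def E_def Bnl_sine_sum P_def Q_def by (auto simp: fun_eq_iff algebra_simps power2_eq_square)
  ultimately show ?thesis unfolding L2inner_def Q_def X_def E_def by simp
qed


section \<open>Integral inequalities\<close>

lemma le_sqrt_mult_sqrt_of_amgm:
  fixes x A B :: real
  assumes "A \<ge> 0" "B \<ge> 0" and amgm: "\<And>\<mu>. \<mu> > 0 \<Longrightarrow> 2 * x \<le> \<mu> * A + B / \<mu>"
  shows "x \<le> sqrt A * sqrt B"
proof (cases "A > 0 \<and> B > 0")
  case True
  define \<mu> where "\<mu> = sqrt B / sqrt A"
  have "\<mu> * A = sqrt A * sqrt B" "B / \<mu> = sqrt A * sqrt B"
    using True by (simp_all add: \<mu>_def field_simps)
  then show ?thesis using amgm[of \<mu>] True by (simp add: \<mu>_def)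
next
  case False
  show ?thesis
  proof (rule ccontr)
    assume "\<not> ?thesis"
    with False assms(1,2) have x: "x > 0" by auto
    consider "A = 0" | "B = 0" using False assms(1,2) by linarith
    then show False
    proof cases
      case 1
      define \<mu> where "\<mu> = B / x + 1"
      have \<mu>: "\<mu> > 0" using x assms(2) by (simp add: \<mu>_def add_nonneg_pos)
      have "B < 2 * x * \<mu>" using x assms(2) by (simp add: \<mu>_def algebra_simps)
      then have "B / \<mu> < 2 * x" using \<mu> by (simp add: divide_less_eq)
      then show False using amgm[OF \<mu>] 1 by simp
    next
      case 2
      have "x * A < 2 * x * (A + 1)" using x assms(1) by (simp add: algebra_simps add_nonneg_pos)
      then have "x / (A + 1) * A < 2 * x" using assms(1) by (simp add: field_simps)
      then show False using amgm[of "x / (A + 1)"] 2 x assms(1) by simp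
    qed
  qed
qed

lemma Cauchy_Schwarz_integral:
  fixes f g :: "real \<Rightarrow> real"
  assumes f: "continuous_on {a..b} f" and g: "continuous_on {a..b} g"
  shows "integral {a..b} (\<lambda>y. \<bar>f y\<bar> * \<bar>g y\<bar>)
         \<le> sqrt (integral {a..b} (\<lambda>y. (f y)^2)) * sqrt (integral {a..b} (\<lambda>y. (g y)^2))"
proof (rule le_sqrt_mult_sqrt_of_amgm)
  show "0 \<le> integral {a..b} (\<lambda>y. (f y)^2)" "0 \<le> integral {a..b} (\<lambda>y. (g y)^2)"
    by (auto intro!: integral_nonneg integrable_continuous_interval continuous_intros f g)
  fix \<mu> :: real assume \<mu>: "\<mu> > 0"
  have "2 * integral {a..b} (\<lambda>y. \<bar>f y\<bar> * \<bar>g y\<bar>) = integral {a..b} (\<lambda>y. 2 * (\<bar>f y\<bar> * \<bar>g y\<bar>))"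
    by simp
  also have "\<dots> \<le> integral {a..b} (\<lambda>y. \<mu> * (f y)^2 + (g y)^2 / \<mu>)"
  proof (rule integral_le)
    fix y
    have "0 \<le> (\<mu> * \<bar>f y\<bar> - \<bar>g y\<bar>)^2 / \<mu>" using \<mu> by simp
    also have "\<dots> = \<mu> * (f y)^2 + (g y)^2 / \<mu> - 2 * (\<bar>f y\<bar> * \<bar>g y\<bar>)"
      using \<mu> by (simp add: field_simps power2_eq_square)
    finally show "2 * (\<bar>f y\<bar> * \<bar>g y\<bar>) \<le> \<mu> * (f y)^2 + (g y)^2 / \<mu>" by simp
  qed (use \<mu> in \<open>auto intro!: integrable_continuous_interval continuous_intros f g\<close>)
  also have "\<dots> = \<mu> * integral {a..b} (\<lambda>y. (f y)^2) + integral {a..b} (\<lambda>y. (g y)^2) / \<mu>"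
    using \<mu> by (subst integral_add) (auto intro!: integrable_continuous_interval continuous_intros f g)
  finally show "2 * integral {a..b} (\<lambda>y. \<bar>f y\<bar> * \<bar>g y\<bar>)
      \<le> \<mu> * integral {a..b} (\<lambda>y. (f y)^2) + integral {a..b} (\<lambda>y. (g y)^2) / \<mu>" .
qed

lemma L2norm_eq_sqrt_integral: "L2norm f = sqrt (integral {0..1} (\<lambda>y. (f y)^2))"
  unfolding L2norm_def L2inner_def by (simp add: power2_eq_square)

lemma L2norm_nonneg: "L2norm f \<ge> 0"
proof (cases "(\<lambda>y. f y * f y) integrable_on {0..1}")
  case True then show ?thesis by (auto simp: L2norm_def L2inner_def intro!: integral_nonneg)
next
  case False then show ?thesis by (simp add: L2norm_def L2inner_def not_integrable_integral)
qed

text \<open>Agmon's inequality: \<open>\<parallel>E\<parallel>\<^sub>\<infinity>\<^sup>2 \<le> 2 \<parallel>E\<parallel> \<parallel>\<nabla>E\<parallel>\<close>, from \<open>E(y)\<^sup>2 = \<integral>\<^sub>0\<^sup>y 2 E E'\<close> and \<open>E(0) = 0\<close>.\<close>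

lemma Agmon_sine_sum:
  assumes y: "y \<in> {0..1}"
  shows "(sine_sum M b y)^2 \<le> 2 * L2norm (sine_sum M b) * L2norm (grad (sine_sum M b))"
proof -
  define E where "E = sine_sum M b"
  define dE where "dE = sine_sum_deriv M b"
  have "((\<lambda>z. (E z)^2) has_vector_derivative (2 * E z * dE z)) (at z within {0..y})" for z
    unfolding has_real_derivative_iff_has_vector_derivative[symmetric] E_def dE_def
    by (auto intro!: derivative_eq_intros has_real_derivative_sine_sum)
  then have "((\<lambda>z. 2 * E z * dE z) has_integral ((E y)^2 - (E 0)^2)) {0..y}"
    using y by (intro fundamental_theorem_of_calculus) auto
  then have "(E y)^2 = integral {0..y} (\<lambda>z. 2 * E z * dE z)" by (simp add: E_def integral_unique)
  also have "\<dots> \<le> integral {0..y} (\<lambda>z. 2 * (\<bar>E z\<bar> * \<bar>dE z\<bar>))"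
    by (rule integral_le)
      (auto intro!: integrable_continuous_interval continuous_intros simp: E_def dE_def abs_mult[symmetric])
  also have "\<dots> \<le> integral {0..1} (\<lambda>z. 2 * (\<bar>E z\<bar> * \<bar>dE z\<bar>))"
    using y by (intro integral_subset_le) (auto intro!: integrable_continuous_interval continuous_intros simp: E_def dE_def)
  also have "\<dots> \<le> 2 * (sqrt (integral {0..1} (\<lambda>y. (E y)^2)) * sqrt (integral {0..1} (\<lambda>y. (dE y)^2)))"
    by (simp, intro Cauchy_Schwarz_integral) (auto intro!: continuous_intros simp: E_def dE_def)
  finally show ?thesis unfolding E_def dE_def L2norm_eq_sqrt_integral grad_sine_sum by simp
qed

lemma abs_integral_deriv_mult_sq_le:
  "\<bar>integral {0..1} (\<lambda>y. sine_sum_deriv M a y * (sine_sum M b y)^2)\<bar>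
   \<le> sqrt (2 * L2norm (sine_sum M b) * L2norm (grad (sine_sum M b)))
      * L2norm (grad (sine_sum M a)) * L2norm (sine_sum M b)"
proof -
  define E where "E = sine_sum M b"
  define dX where "dX = sine_sum_deriv M a"
  define R where "R = sqrt (2 * L2norm (sine_sum M b) * L2norm (grad (sine_sum M b)))"
  have "norm (integral {0..1} (\<lambda>y. dX y * (E y)^2)) \<le> integral {0..1} (\<lambda>y. R * (\<bar>dX y\<bar> * \<bar>E y\<bar>))"
  proof (rule integral_norm_bound_integral)
    fix y :: real assume y: "y \<in> {0..1}"
    have "\<bar>E y\<bar> \<le> R"
      unfolding E_def R_def using Agmon_sine_sum[OF y] real_sqrt_le_mono by fastforce
    then have "\<bar>dX y\<bar> * \<bar>E y\<bar> * \<bar>E y\<bar> \<le> \<bar>dX y\<bar> * \<bar>E y\<bar> * R"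
      by (intro mult_left_mono) auto
    then show "norm (dX y * (E y)^2) \<le> R * (\<bar>dX y\<bar> * \<bar>E y\<bar>)"
      by (simp add: abs_mult power2_eq_square algebra_simps)
  qed (auto intro!: integrable_continuous_interval continuous_intros simp: E_def dX_def)
  then have "\<bar>integral {0..1} (\<lambda>y. dX y * (E y)^2)\<bar> \<le> integral {0..1} (\<lambda>y. R * (\<bar>dX y\<bar> * \<bar>E y\<bar>))"
    by simp
  also have "\<dots> \<le> R * (sqrt (integral {0..1} (\<lambda>y. (dX y)^2)) * sqrt (integral {0..1} (\<lambda>y. (E y)^2)))"
    by (simp, intro mult_left_mono Cauchy_Schwarz_integral)
      (auto intro!: continuous_intros simp: E_def dX_def R_def L2norm_nonneg)
  finally show ?thesis unfolding E_def dX_def R_def L2norm_eq_sqrt_integral grad_sine_sum by (simp add: mult.assoc)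
qed

lemma Bessel_hcos:
  assumes f: "continuous_on {0..1} f"
  shows "(\<Sum>k\<in>{1..M}. (L2inner f (hcos k))^2) \<le> L2inner f f"
proof -
  define d where "d k = L2inner f (hcos k)" for k
  define P where "P y = (\<Sum>k\<in>{1..M}. d k * hcos k y)" for y
  have P: "continuous_on {0..1} P" unfolding P_def by (intro continuous_intros)
  have fP: "L2inner P f = (\<Sum>k\<in>{1..M}. (d k)^2)"
    unfolding P_def L2inner_def
    by (subst integral_finite_sum_mult) (auto intro!: continuous_intros f simp: d_def L2inner_def power2_eq_square mult.commute)
  have hcos_P: "L2inner (hcos j) P = d j" if j: "j \<in> {1..M}" for j
  proof -
    have "L2inner (hcos j) P = (\<Sum>k\<in>{1..M}. d k * L2inner (hcos k) (hcos j))"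
      unfolding P_def L2inner_def by (subst mult.commute, subst integral_finite_sum_mult) (auto intro!: continuous_intros)
    also have "\<dots> = (\<Sum>k\<in>{1..M}. if k = j then d k else 0)"
      using j by (intro sum.cong) (auto simp: L2inner_def integral_hcos_hcos)
    finally show ?thesis using j by simp
  qed
  have "(\<lambda>y. P y * P y) = (\<lambda>y. (\<Sum>j\<in>{1..M}. d j * hcos j y) * P y)"
    by (simp add: P_def)
  then have "L2inner P P = (\<Sum>j\<in>{1..M}. d j * L2inner (hcos j) P)"
    unfolding L2inner_def by (simp add: integral_finite_sum_mult continuous_on_hcos P)
  then have PP: "L2inner P P = (\<Sum>k\<in>{1..M}. (d k)^2)"
    by (simp add: hcos_P power2_eq_square)
  have "0 \<le> integral {0..1} (\<lambda>y. (f y - P y)^2)"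
    by (rule integral_nonneg) (auto intro!: integrable_continuous_interval continuous_intros f P)
  also have "\<dots> = integral {0..1} (\<lambda>y. (f y)^2 - 2 * (P y * f y) + P y * P y)"
    by (simp add: power2_eq_square algebra_simps)
  also have "\<dots> = L2inner f f - 2 * L2inner P f + L2inner P P"
    unfolding L2inner_def
    by (subst integral_add integral_diff, auto intro!: integrable_continuous_interval continuous_intros f P
        simp: power2_eq_square)+
  finally show ?thesis unfolding fP PP d_def by simp
qed

definition Sobolev_const :: "real \<Rightarrow> real" where
  "Sobolev_const \<delta> = sqrt 2 * sqrt (\<Sum>k. (pi * real k) powr (-1 - 4 * \<delta>))"

lemma summable_pi_powr:
  assumes "\<delta> > 0" shows "summable (\<lambda>k. (pi * real k) powr (-1 - 4 * \<delta>))"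
proof -
  have "summable (\<lambda>k. real k powr (-1 - 4 * \<delta>))" using assms by (subst summable_real_powr_iff) auto
  then have "summable (\<lambda>k. pi powr (-1 - 4 * \<delta>) * real k powr (-1 - 4 * \<delta>))" by (rule summable_mult)
  then show ?thesis by (simp add: powr_mult)
qed

lemma Sobolev_const_nonneg: "\<delta> > 0 \<Longrightarrow> Sobolev_const \<delta> \<ge> 0"
  unfolding Sobolev_const_def by (simp add: summable_pi_powr suminf_nonneg)

text \<open>The embedding of \<open>D((-A)\<^bsup>1/4+\<delta>\<^esup>)\<close> into \<open>L\<^sup>\<infinity>\<close>, by Cauchy-Schwarz on the coefficients
  with weights \<open>(\<pi>k)\<^bsup>1/2+2\<delta>\<^esup>\<close>.\<close>

lemma abs_sine_sum_le_Sobolev: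
  assumes \<delta>: "\<delta> > 0"
  shows "\<bar>sine_sum M a y\<bar> \<le> Sobolev_const \<delta> * L2norm (fracA (1/4 + \<delta>) (sine_sum M a))"
proof -
  define w where "w k = (pi * real k) powr (2 * (1/4 + \<delta>))" for k
  have w: "w k > 0" if "k \<in> {1..M}" for k using that by (simp add: w_def)
  have "\<bar>sine_sum M a y\<bar> \<le> (\<Sum>k\<in>{1..M}. sqrt 2 * (\<bar>w k * a k\<bar> * \<bar>1 / w k\<bar>))"
    unfolding sine_sum_def
  proof (rule order_trans[OF sum_abs sum_mono])
    fix k assume k: "k \<in> {1..M}"
    have "\<bar>a k * hb k y\<bar> \<le> \<bar>a k\<bar> * sqrt 2" unfolding abs_mult by (intro mult_left_mono abs_hb_le) auto
    then show "\<bar>a k * hb k y\<bar> \<le> sqrt 2 * (\<bar>w k * a k\<bar> * \<bar>1 / w k\<bar>)"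
      using w[OF k] by (simp add: abs_mult ac_simps)
  qed
  also have "\<dots> = sqrt 2 * (\<Sum>k\<in>{1..M}. \<bar>w k * a k\<bar> * \<bar>1 / w k\<bar>)"
    by (simp add: sum_distrib_left)
  also have "\<dots> \<le> sqrt 2 * (L2_set (\<lambda>k. w k * a k) {1..M} * L2_set (\<lambda>k. 1 / w k) {1..M})"
    by (intro mult_left_mono L2_set_mult_ineq) auto
  finally have bound: "\<bar>sine_sum M a y\<bar> \<le> sqrt 2 * (L2_set (\<lambda>k. w k * a k) {1..M} * L2_set (\<lambda>k. 1 / w k) {1..M})" .
  have "L2_set (\<lambda>k. 1 / w k) {1..M} \<le> sqrt (\<Sum>k. (pi * real k) powr (-1 - 4 * \<delta>))"
  proof -
    have "(\<Sum>k\<in>{1..M}. (1 / w k)^2) = (\<Sum>k\<in>{1..M}. (pi * real k) powr (-1 - 4 * \<delta>))"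
    proof (intro sum.cong refl)
      fix k assume k: "k \<in> {1..M}"
      then have "pi * real k > 0" by auto
      then show "(1 / w k)^2 = (pi * real k) powr (-1 - 4 * \<delta>)"
        by (simp add: w_def power_divide powr_realpow'[symmetric] powr_powr powr_minus_divide powr_diff
            flip: powr_mult_base)
    qed
    also have "\<dots> \<le> (\<Sum>k. (pi * real k) powr (-1 - 4 * \<delta>))"
      by (intro sum_le_suminf summable_pi_powr \<delta>) auto
    finally show ?thesis unfolding L2_set_def by (rule real_sqrt_le_mono)
  qed
  then have "\<bar>sine_sum M a y\<bar> \<le> sqrt 2 * (L2_set (\<lambda>k. w k * a k) {1..M} * sqrt (\<Sum>k. (pi * real k) powr (-1 - 4 * \<delta>)))"
    using bound by (meson L2_set_nonneg mult_left_mono order_trans real_sqrt_ge_zero zero_le_numeral)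
  then show ?thesis
    by (simp add: Sobolev_const_def fracA_sine_sum L2norm_sine_sum w_def ac_simps)
qed


section \<open>Heat semigroup, Duhamel formula and Gronwall's lemma\<close>

lemma eigval_mult_exp_le:
  assumes "\<sigma> > 0"
  shows "eigval k * exp (- 2 * eigval k * \<sigma>) \<le> 1 / (2 * \<sigma>)"
proof -
  have "2 * eigval k * \<sigma> \<le> exp (2 * eigval k * \<sigma>)"
    using exp_ge_add_one_self[of "2 * eigval k * \<sigma>"] by linarith
  then have "2 * \<sigma> * eigval k * exp (- 2 * eigval k * \<sigma>) \<le> exp (2 * eigval k * \<sigma>) * exp (- 2 * eigval k * \<sigma>)"
    by (intro mult_right_mono) (auto simp: ac_simps)
  also have "\<dots> = 1" by (simp flip: exp_add)
  finally show ?thesis using assms by (simp add: field_simps)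
qed

text \<open>Since \<open>\<langle>B[X,E], h\<^sub>k\<rangle> = -k\<pi> \<langle>X E, hcos k\<rangle>\<close>, the heat semigroup absorbs the derivative
  at the price of \<open>\<sigma>\<^bsup>-1/2\<^esup>\<close>, and Bessel's inequality for the cosines bounds the rest by
  \<open>\<parallel>X\<parallel>\<^sub>\<infinity> \<parallel>E\<parallel>\<close>.\<close>

lemma heat_Bnl_coeffs_bound:
  assumes \<sigma>: "\<sigma> > 0" and K: "\<And>y. y \<in> {0..1} \<Longrightarrow> \<bar>sine_sum M a y\<bar> \<le> K"
  shows "L2_set (\<lambda>k. 2 * exp (- eigval k * \<sigma>) * L2inner (Bnl (sine_sum M a) (sine_sum M b)) (hb k)) {1..M}
         \<le> sqrt (2 / \<sigma>) * K * L2_set b {1..M}"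
proof -
  define XE where "XE y = sine_sum M a y * sine_sum M b y" for y
  define d where "d k = L2inner XE (hcos k)" for k
  have XE: "continuous_on {0..1} XE" unfolding XE_def by (intro continuous_intros)
  have K0: "K \<ge> 0" using K[of 0] by auto
  have "(\<Sum>k\<in>{1..M}. (2 * exp (- eigval k * \<sigma>) * L2inner (Bnl (sine_sum M a) (sine_sum M b)) (hb k))^2)
      = (\<Sum>k\<in>{1..M}. 4 * (eigval k * exp (- 2 * eigval k * \<sigma>)) * (d k)^2)"
  proof (intro sum.cong refl)
    fix k
    have "(exp (- eigval k * \<sigma>))^2 = exp (- 2 * eigval k * \<sigma>)"
      by (simp add: power2_eq_square flip: exp_add)
    moreover have "L2inner (Bnl (sine_sum M a) (sine_sum M b)) (hb k) = - (real k * pi) * d k"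
      by (simp add: L2inner_Bnl_hb d_def XE_def) (simp add: L2inner_def XE_def)
    ultimately show "(2 * exp (- eigval k * \<sigma>) * L2inner (Bnl (sine_sum M a) (sine_sum M b)) (hb k))^2
        = 4 * (eigval k * exp (- 2 * eigval k * \<sigma>)) * (d k)^2"
      by (simp add: power_mult_distrib eigval_def ac_simps)
  qed
  also have "\<dots> \<le> (\<Sum>k\<in>{1..M}. (2 / \<sigma>) * (d k)^2)"
    using eigval_mult_exp_le[OF \<sigma>] \<sigma> by (intro sum_mono mult_right_mono) (auto simp: field_simps)
  also have "\<dots> = (2 / \<sigma>) * (\<Sum>k\<in>{1..M}. (d k)^2)"
    by (simp add: sum_distrib_left)
  also have "\<dots> \<le> (2 / \<sigma>) * L2inner XE XE"
    unfolding d_def using \<sigma> Bessel_hcos[OF XE] by (intro mult_left_mono) auto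
  also have "\<dots> \<le> (2 / \<sigma>) * integral {0..1} (\<lambda>y. K^2 * (sine_sum M b y)^2)"
    unfolding L2inner_def
  proof (intro mult_left_mono integral_le)
    fix y :: real assume y: "y \<in> {0..1}"
    have "(sine_sum M a y)^2 \<le> K^2" using K[OF y] by (metis abs_ge_zero power2_abs power_mono)
    then show "XE y * XE y \<le> K^2 * (sine_sum M b y)^2"
      by (simp add: XE_def power2_eq_square[symmetric] power_mult_distrib mult_right_mono)
  qed (use \<sigma> in \<open>auto intro!: integrable_continuous_interval continuous_intros XE\<close>)
  also have "\<dots> = (2 / \<sigma>) * K^2 * (\<Sum>k\<in>{1..M}. (b k)^2)"
    using L2inner_sine_sum[of M b b] by (simp add: L2inner_def power2_eq_square)
  also have "\<dots> = (sqrt (2 / \<sigma>) * K * L2_set b {1..M})^2"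
    using \<sigma> by (simp add: power_mult_distrib L2_set_def sum_nonneg)
  finally show ?thesis
    unfolding L2_set_def[of "\<lambda>k. 2 * _ k * _ k"] using K0 \<sigma> by (intro real_le_lsqrt) auto
qed

lemma powr_le_exp:
  fixes x \<alpha> :: real
  assumes "x > 0" "0 \<le> \<alpha>" "\<alpha> \<le> 1"
  shows "x powr \<alpha> \<le> exp x"
proof (cases "x \<le> 1")
  case True
  then have "x powr \<alpha> \<le> 1" using assms by (intro powr_le1) auto
  then show ?thesis using assms by (meson one_le_exp_iff less_imp_le order_trans)
next
  case False
  then have "x powr \<alpha> \<le> x" using assms powr_mono[of \<alpha> 1 x] by simp
  with exp_ge_add_one_self[of x] show ?thesis by linarith
qed

lemma L2_set_mono_abs:
  assumes "\<And>i. i \<in> K \<Longrightarrow> \<bar>f i\<bar> \<le> \<bar>g i\<bar>"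
  shows "L2_set f K \<le> L2_set g K"
  unfolding L2_set_def using assms
  by (intro real_sqrt_le_mono sum_mono) (metis abs_ge_zero power2_abs power_mono)

lemma heat_smoothing:
  assumes \<sigma>: "\<sigma> > 0" and \<alpha>: "0 \<le> \<alpha>" "\<alpha> \<le> 1"
  shows "L2_set (\<lambda>k. exp (- eigval k * \<sigma>) * c k) {1..M}
       \<le> \<sigma> powr (- \<alpha>) * L2_set (\<lambda>k. (pi * real k) powr (2 * - \<alpha>) * c k) {1..M}"
proof -
  have "exp (- eigval k * \<sigma>) \<le> \<sigma> powr (- \<alpha>) * (pi * real k) powr (2 * - \<alpha>)" if k: "k \<in> {1..M}" for k
  proof -
    define x where "x = eigval k * \<sigma>"
    have pk: "pi * real k > 0" using k by auto
    then have x: "x > 0" using \<sigma> by (simp add: x_def eigval_def zero_less_mult_iff)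
    have "\<sigma> powr (- \<alpha>) * (pi * real k) powr (2 * - \<alpha>) = (\<sigma> * (pi * real k) powr 2) powr (- \<alpha>)"
      using \<sigma> pk by (simp only: powr_mult[of \<sigma>] powr_ge_zero powr_gt_zero powr_powr)
    also have "\<dots> = inverse (x powr \<alpha>)"
      using pk by (simp add: x_def eigval_def powr_minus mult.commute powr_numeral)
    finally have "\<sigma> powr (- \<alpha>) * (pi * real k) powr (2 * - \<alpha>) = inverse (x powr \<alpha>)" .
    moreover have "inverse (exp x) \<le> inverse (x powr \<alpha>)"
      using x \<alpha> powr_le_exp[of x \<alpha>] by (intro le_imp_inverse_le) auto
    ultimately show ?thesis by (simp add: x_def exp_minus)
  qed
  then have "L2_set (\<lambda>k. exp (- eigval k * \<sigma>) * c k) {1..M}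
      \<le> L2_set (\<lambda>k. \<sigma> powr (- \<alpha>) * ((pi * real k) powr (2 * - \<alpha>) * c k)) {1..M}"
    by (intro L2_set_mono_abs) (auto simp: abs_mult mult.assoc[symmetric] intro!: mult_right_mono)
  also have "\<dots> = \<sigma> powr (- \<alpha>) * L2_set (\<lambda>k. (pi * real k) powr (2 * - \<alpha>) * c k) {1..M}"
    by (simp add: L2_set_right_distrib)
  finally show ?thesis .
qed

lemma L2_set_integral_le:
  fixes v :: "'k \<Rightarrow> real \<Rightarrow> real"
  assumes "finite K" and v: "\<And>k. k \<in> K \<Longrightarrow> continuous_on {a..b} (v k)"
  shows "L2_set (\<lambda>k. integral {a..b} (v k)) K \<le> integral {a..b} (\<lambda>\<rho>. L2_set (\<lambda>k. v k \<rho>) K)"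
proof -
  define I where "I k = integral {a..b} (v k)" for k
  define V where "V \<rho> = L2_set (\<lambda>k. v k \<rho>) K" for \<rho>
  define N where "N = L2_set I K"
  have V: "continuous_on {a..b} V" unfolding V_def L2_set_def by (intro continuous_intros v) auto
  have "N^2 = (\<Sum>k\<in>K. I k * I k)" unfolding N_def L2_set_def by (simp add: sum_nonneg power2_eq_square)
  also have "\<dots> \<le> integral {a..b} (\<lambda>\<rho>. N * V \<rho>)"
  proof (rule has_integral_le)
    show "((\<lambda>\<rho>. \<Sum>k\<in>K. I k * v k \<rho>) has_integral (\<Sum>k\<in>K. I k * I k)) {a..b}"
      unfolding I_def using assms
      by (intro has_integral_sum has_integral_mult_right integrable_integral integrable_continuous_interval) auto
    show "((\<lambda>\<rho>. N * V \<rho>) has_integral integral {a..b} (\<lambda>\<rho>. N * V \<rho>)) {a..b}"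
      by (intro integrable_integral integrable_continuous_interval continuous_intros V)
    fix \<rho>
    have "(\<Sum>k\<in>K. I k * v k \<rho>) \<le> (\<Sum>k\<in>K. \<bar>I k\<bar> * \<bar>v k \<rho>\<bar>)"
      by (intro sum_mono) (simp flip: abs_mult)
    also have "\<dots> \<le> N * V \<rho>" unfolding N_def V_def by (rule L2_set_mult_ineq)
    finally show "(\<Sum>k\<in>K. I k * v k \<rho>) \<le> N * V \<rho>" .
  qed
  also have "\<dots> = N * integral {a..b} V" by simp
  finally have "N * N \<le> N * integral {a..b} V" by (simp add: power2_eq_square)
  moreover have "0 \<le> integral {a..b} V"
    by (rule integral_nonneg[OF integrable_continuous_interval[OF V]]) (simp add: V_def)
  ultimately show ?thesis unfolding N_def I_def V_def
    by (metis L2_set_nonneg mult_le_cancel_left order_less_le)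
qed

lemma Duhamel_L2_set:
  fixes c g :: "nat \<Rightarrow> real \<Rightarrow> real"
  assumes sr: "s < r"
    and der: "\<And>k \<tau>. k \<in> {1..M} \<Longrightarrow> \<tau> \<in> {s..r} \<Longrightarrow>
               (c k has_real_derivative (- eigval k * c k \<tau> + 2 * g k \<tau>)) (at \<tau> within {s..r})"
    and g: "\<And>k. k \<in> {1..M} \<Longrightarrow> continuous_on {s..r} (g k)"
  shows "L2_set (\<lambda>k. c k r) {1..M} \<le> L2_set (\<lambda>k. exp (- eigval k * (r - s)) * c k s) {1..M}
           + integral {s..r} (\<lambda>\<rho>. L2_set (\<lambda>k. 2 * exp (- eigval k * (r - \<rho>)) * g k \<rho>) {1..M})"
proof -
  define v where "v k \<rho> = 2 * exp (- eigval k * (r - \<rho>)) * g k \<rho>" for k \<rho>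
  have v: "continuous_on {s..r} (v k)" if "k \<in> {1..M}" for k
    unfolding v_def using g[OF that] by (intro continuous_intros)
  have variation_of_constants:
    "c k r = exp (- eigval k * (r - s)) * c k s + integral {s..r} (v k)" if k: "k \<in> {1..M}" for k
  proof -
    have "((\<lambda>\<rho>. exp (- eigval k * (r - \<rho>)) * c k \<rho>) has_vector_derivative v k \<rho>) (at \<rho> within {s..r})"
      if "\<rho> \<in> {s..r}" for \<rho>
      unfolding has_real_derivative_iff_has_vector_derivative[symmetric] v_def
      by (rule derivative_eq_intros refl der[OF k that] | simp)+ (simp add: algebra_simps)
    then have "(v k has_integral (exp (- eigval k * (r - r)) * c k r - exp (- eigval k * (r - s)) * c k s)) {s..r}"
      using sr by (intro fundamental_theorem_of_calculus) auto
    then show ?thesis by (simp add: integral_unique)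
  qed
  have "L2_set (\<lambda>k. c k r) {1..M}
      = L2_set (\<lambda>k. exp (- eigval k * (r - s)) * c k s + integral {s..r} (v k)) {1..M}"
    by (rule L2_set_cong) (simp_all add: variation_of_constants)
  also have "\<dots> \<le> L2_set (\<lambda>k. exp (- eigval k * (r - s)) * c k s) {1..M} + L2_set (\<lambda>k. integral {s..r} (v k)) {1..M}"
    by (rule L2_set_triangle_ineq)
  also have "L2_set (\<lambda>k. integral {s..r} (v k)) {1..M} \<le> integral {s..r} (\<lambda>\<rho>. L2_set (\<lambda>k. v k \<rho>) {1..M})"
    using v by (intro L2_set_integral_le) auto
  finally show ?thesis by (simp add: v_def)
qed

lemma integral_le_singular_left:
  fixes G :: "real \<Rightarrow> real"
  assumes ab: "a < b" and \<beta>: "0 \<le> \<beta>" "\<beta> < 1"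
    and G: "continuous_on {a..b} G" and bound: "\<And>x. a < x \<Longrightarrow> x \<le> b \<Longrightarrow> G x \<le> C * (x - a) powr (- \<beta>)"
  shows "integral {a..b} G \<le> C * ((b - a) powr (1 - \<beta>) / (1 - \<beta>))"
proof -
  have "((\<lambda>x. x powr (- \<beta>)) has_integral ((b - a) powr (- \<beta> + 1) / (- \<beta> + 1))) {0..b - a}"
    using \<beta> ab by (intro has_integral_powr_from_0) auto
  from has_integral_shift_real_ivl[OF this, of "- a"]
  have "((\<lambda>x. C * (x - a) powr (- \<beta>)) has_integral C * ((b - a) powr (1 - \<beta>) / (1 - \<beta>))) {a..b}"
    by (auto dest: has_integral_mult_right[where c = C] simp: algebra_simps)
  then have "((\<lambda>x. if x = a then G a else C * (x - a) powr (- \<beta>)) has_integral C * ((b - a) powr (1 - \<beta>) / (1 - \<beta>))) {a..b}"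
    by (rule has_integral_spike_finite_eq[of "{a}", THEN iffD1, rotated 2]) auto
  then show ?thesis
    by (rule has_integral_le[OF integrable_integral[OF integrable_continuous_interval[OF G]]])
      (auto simp: bound)
qed

lemma integral_le_singular_right:
  fixes G :: "real \<Rightarrow> real"
  assumes ab: "a < b" and \<beta>: "0 \<le> \<beta>" "\<beta> < 1"
    and G: "continuous_on {a..b} G" and bound: "\<And>x. a \<le> x \<Longrightarrow> x < b \<Longrightarrow> G x \<le> C * (b - x) powr (- \<beta>)"
  shows "integral {a..b} G \<le> C * ((b - a) powr (1 - \<beta>) / (1 - \<beta>))"
proof -
  have "integral {- b..- a} (\<lambda>x. G (- x)) \<le> C * ((- a - - b) powr (1 - \<beta>) / (1 - \<beta>))"
    using ab \<beta> bound[of "- x" for x]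
    by (intro integral_le_singular_left continuous_on_compose2[OF G]) (auto intro!: continuous_intros simp: add.commute)
  then show ?thesis by simp
qed

lemma powr_mult_powr_half_le:
  assumes "L > 0" "0 \<le> \<alpha>" "\<alpha> \<le> 1"
  shows "(2 * L) powr \<alpha> * L powr (1/2 - \<alpha>) \<le> 2 * sqrt (2 * L)"
proof -
  have "(2 * L) powr \<alpha> * L powr (1/2 - \<alpha>) = 2 powr \<alpha> * sqrt L"
    using assms by (simp add: powr_mult mult.assoc powr_half_sqrt flip: powr_add)
  also have "\<dots> \<le> 2 * sqrt (2 * L)"
    using assms powr_mono[of \<alpha> 1 2] by (intro mult_mono) auto
  finally show ?thesis .
qed

text \<open>A Volterra kernel with singularities of order \<open>1/2\<close> at \<open>r\<close> and \<open>\<alpha>\<close> at \<open>s\<close>: after splitting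
  at the midpoint, each half only sees one of them.\<close>

lemma singular_integral_bound:
  fixes G :: "real \<Rightarrow> real"
  assumes sr: "s < r" and \<alpha>: "0 \<le> \<alpha>" "\<alpha> < 1" and C: "C \<ge> 0"
    and G: "continuous_on {s..r} G"
    and bound: "\<And>\<rho>. s < \<rho> \<Longrightarrow> \<rho> < r \<Longrightarrow> G \<rho> \<le> C * (r - \<rho>) powr (-1/2) * (\<rho> - s) powr (- \<alpha>)"
  shows "(r - s) powr \<alpha> * integral {s..r} G \<le> 2 * (1 / (1 - \<alpha>) + 2) * C * sqrt (r - s)"
proof -
  define L where "L = (r - s) / 2"
  define m where "m = s + L"
  have L: "L > 0" "r - s = 2 * L" "m - s = L" "r - m = L" using sr by (auto simp: L_def m_def field_simps)
  have "integral {s..m} G \<le> C * L powr (-1/2) * (L powr (1 - \<alpha>) / (1 - \<alpha>))"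
  proof (rule integral_le_singular_left[where a = s and b = m, unfolded L(3)])
    fix x assume x: "s < x" "x \<le> m"
    have "(r - x) powr (-1/2) \<le> L powr (-1/2)"
      using x L by (intro powr_mono2') auto
    then have "C * (r - x) powr (-1/2) * (x - s) powr (- \<alpha>) \<le> C * L powr (-1/2) * (x - s) powr (- \<alpha>)"
      using C by (intro mult_right_mono mult_left_mono) auto
    moreover have "x < r" using x L by linarith
    ultimately show "G x \<le> C * L powr (-1/2) * (x - s) powr (- \<alpha>)"
      using bound[of x] x by linarith
  qed (use L \<alpha> in \<open>auto intro: continuous_on_subset[OF G]\<close>)
  moreover have "integral {m..r} G \<le> C * L powr (- \<alpha>) * (L powr (1 - 1/2) / (1 - 1/2))"
  proof (rule integral_le_singular_right[where a = m and b = r and \<beta> = "1/2", unfolded L(4)])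
    fix x assume x: "m \<le> x" "x < r"
    have "(x - s) powr (- \<alpha>) \<le> L powr (- \<alpha>)"
      using x L \<alpha> by (intro powr_mono2') auto
    then have "C * (r - x) powr (-1/2) * (x - s) powr (- \<alpha>) \<le> C * (r - x) powr (-1/2) * L powr (- \<alpha>)"
      using C by (intro mult_left_mono) auto
    also have "\<dots> = C * L powr (- \<alpha>) * (r - x) powr (- (1/2))"
      by (simp add: ac_simps)
    finally have "C * (r - x) powr (-1/2) * (x - s) powr (- \<alpha>) \<le> C * L powr (- \<alpha>) * (r - x) powr (- (1/2))" .
    moreover have "s < x" using x L by linarith
    ultimately show "G x \<le> C * L powr (- \<alpha>) * (r - x) powr (- (1/2))"
      using bound[of x] x by linarith
  qed (use L in \<open>auto intro: continuous_on_subset[OF G]\<close>)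
  moreover have "integral {s..r} G = integral {s..m} G + integral {m..r} G"
    using L by (intro Henstock_Kurzweil_Integration.integral_combine[symmetric] integrable_continuous_interval G) auto
  moreover have "L powr (-1/2) * L powr (1 - \<alpha>) = L powr (1/2 - \<alpha>)" "L powr (- \<alpha>) * L powr (1 - 1/2) = L powr (1/2 - \<alpha>)"
    using L by (simp_all add: powr_add[symmetric])
  ultimately have "integral {s..r} G \<le> C * L powr (1/2 - \<alpha>) * (1 / (1 - \<alpha>) + 2)"
    by (simp add: algebra_simps)
  then have "(r - s) powr \<alpha> * integral {s..r} G \<le> (r - s) powr \<alpha> * (C * L powr (1/2 - \<alpha>) * (1 / (1 - \<alpha>) + 2))"
    by (rule mult_left_mono) simp
  also have "\<dots> = (r - s) powr \<alpha> * L powr (1/2 - \<alpha>) * (C * (1 / (1 - \<alpha>) + 2))"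
    by (simp only: ac_simps)
  also have "\<dots> \<le> 2 * sqrt (r - s) * (C * (1 / (1 - \<alpha>) + 2))"
    unfolding L(2) using L(1) \<alpha> C by (intro mult_right_mono powr_mult_powr_half_le) auto
  finally show ?thesis by (simp only: ac_simps)
qed

lemma Gronwall_differential:
  fixes f f' p :: "real \<Rightarrow> real"
  assumes ut: "u \<le> t"
    and der: "\<And>\<tau>. \<tau> \<in> {u..t} \<Longrightarrow> (f has_real_derivative f' \<tau>) (at \<tau> within {u..t})"
    and le: "\<And>\<tau>. \<tau> \<in> {u..t} \<Longrightarrow> f' \<tau> \<le> p \<tau> * f \<tau>"
    and p: "continuous_on {u..t} p"
  shows "f t \<le> f u * exp (integral {u..t} p)"
proof -
  define P where "P \<tau> = integral {u..\<tau>} p" for \<tau>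
  have P: "(P has_real_derivative p \<tau>) (at \<tau> within {u..t})" if "\<tau> \<in> {u..t}" for \<tau>
    unfolding P_def has_real_derivative_iff_has_vector_derivative
    by (rule integral_has_vector_derivative[OF p that])
  define g' where "g' \<tau> = (f' \<tau> - p \<tau> * f \<tau>) * exp (- P \<tau>)" for \<tau>
  have "((\<lambda>\<tau>. f \<tau> * exp (- P \<tau>)) has_vector_derivative g' \<tau>) (at \<tau> within {u..t})" if "\<tau> \<in> {u..t}" for \<tau>
    unfolding has_real_derivative_iff_has_vector_derivative[symmetric] g'_def
    by (rule derivative_eq_intros der[OF that] P[OF that] refl | simp)+ (simp add: algebra_simps)
  then have "(g' has_integral (f t * exp (- P t) - f u * exp (- P u))) {u..t}"
    using ut by (intro fundamental_theorem_of_calculus)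
  then have "f t * exp (- P t) - f u * exp (- P u) \<le> 0"
    by (rule has_integral_le[OF _ has_integral_0]) (use le in \<open>auto simp: g'_def mult_nonpos_nonneg\<close>)
  then have "f t * exp (- P t) \<le> f u" by (simp add: P_def)
  then show ?thesis by (simp add: P_def exp_minus field_simps)
qed


section \<open>Energy estimate for the linearised equation\<close>

lemma Young_cubic_bound:
  fixes A B C \<sigma> \<epsilon> :: real
  assumes "A \<ge> 0" "B \<ge> 0" "C \<ge> 0" "\<epsilon> > 0" "\<sigma>^2 = 2 * B * C"
  shows "2 * \<sigma> * A * B \<le> C^2 + (\<epsilon> * A^2 + 1 / \<epsilon>^2) * B^2"
proof -
  have "0 \<le> (\<epsilon> * A * B - \<sigma>)^2 / \<epsilon>" using assms by simp
  then have "2 * \<sigma> * A * B \<le> \<epsilon> * A^2 * B^2 + \<sigma>^2 / \<epsilon>"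
    using assms(4) by (simp add: field_simps power2_eq_square)
  also have "\<sigma>^2 / \<epsilon> = 2 * C * (B / \<epsilon>)" using assms by (simp add: field_simps)
  also have "2 * C * (B / \<epsilon>) \<le> C^2 + (B / \<epsilon>)^2" using sum_squares_bound[of C "B / \<epsilon>"] by simp
  finally show ?thesis using assms(4) by (simp add: field_simps power2_eq_square)
qed

text \<open>The left-hand side is \<open>d/dt \<parallel>E\<parallel>\<^sup>2 = -2\<parallel>\<nabla>E\<parallel>\<^sup>2 + 2\<integral>X' E\<^sup>2\<close>; the cubic term is controlled by
  Agmon's inequality and absorbed into the dissipation.\<close>

lemma energy_dissipation_bound:
  assumes \<epsilon>: "\<epsilon> > 0"
  shows "2 * (\<Sum>k\<in>{1..M}. b k * (- eigval k * b k + 2 * L2inner (Bnl (sine_sum M a) (sine_sum M b)) (hb k)))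
     \<le> (\<epsilon> * (\<Sum>k\<in>{1..M}. eigval k * (a k)^2) + 1 / \<epsilon>^2) * (\<Sum>k\<in>{1..M}. (b k)^2)"
proof -
  define A where "A = L2norm (grad (sine_sum M a))"
  define B where "B = L2norm (sine_sum M b)"
  define C where "C = L2norm (grad (sine_sum M b))"
  define \<sigma> where "\<sigma> = sqrt (2 * B * C)"
  have ABC: "A \<ge> 0" "B \<ge> 0" "C \<ge> 0" by (auto simp: A_def B_def C_def L2norm_nonneg)
  have "2 * (\<Sum>k\<in>{1..M}. b k * (- eigval k * b k + 2 * L2inner (Bnl (sine_sum M a) (sine_sum M b)) (hb k)))
      = -2 * (\<Sum>k\<in>{1..M}. eigval k * (b k)^2)
        + 4 * (\<Sum>k\<in>{1..M}. b k * L2inner (Bnl (sine_sum M a) (sine_sum M b)) (hb k))"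
    by (simp add: sum_distrib_left sum_subtractf sum_negf algebra_simps power2_eq_square)
  also have "\<dots> = -2 * C^2 + 2 * integral {0..1} (\<lambda>y. sine_sum_deriv M a y * (sine_sum M b y)^2)"
    using L2inner_sine_sum_right[OF continuous_on_Bnl_sine_sum, of M a b M b]
    by (simp add: C_def L2norm_grad_sine_sum_sq L2inner_Bnl_self)
  also have "\<dots> \<le> -2 * C^2 + 2 * (\<sigma> * A * B)"
    using abs_integral_deriv_mult_sq_le[of M a b] unfolding \<sigma>_def A_def B_def C_def by linarith
  also have "\<dots> \<le> (\<epsilon> * A^2 + 1 / \<epsilon>^2) * B^2"
  proof -
    have "\<sigma>^2 = 2 * B * C" using ABC by (simp add: \<sigma>_def)
    from Young_cubic_bound[OF ABC \<epsilon> this] show ?thesis using zero_le_power2[of C] by linarith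
  qed
  finally show ?thesis
    unfolding A_def B_def L2norm_grad_sine_sum_sq L2norm_sine_sum by (simp add: L2_set_def sum_nonneg)
qed


section \<open>Coefficient dynamics of the linearised Galerkin equation\<close>

definition Bcoeff :: "nat \<Rightarrow> (nat \<Rightarrow> real \<Rightarrow> real) \<Rightarrow> (nat \<Rightarrow> real \<Rightarrow> real) \<Rightarrow> nat \<Rightarrow> real \<Rightarrow> real" where
  "Bcoeff M a c k \<tau> = L2inner (Bnl (sine_sum M (\<lambda>j. a j \<tau>)) (sine_sum M (\<lambda>j. c j \<tau>))) (hb k)"

lemma Bcoeff_eq_bilinear_sum:
  "Bcoeff M a c k \<tau> = - (real k * pi) *
     (\<Sum>i\<in>{1..M}. a i \<tau> * (\<Sum>j\<in>{1..M}. c j \<tau> * integral {0..1} (\<lambda>y. hb j y * (hb i y * hcos k y))))"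
proof -
  have "integral {0..1} (\<lambda>y. sine_sum M (\<lambda>j. a j \<tau>) y * sine_sum M (\<lambda>j. c j \<tau>) y * hcos k y)
      = L2inner (sine_sum M (\<lambda>j. a j \<tau>)) (\<lambda>y. sine_sum M (\<lambda>j. c j \<tau>) y * hcos k y)"
    by (simp add: L2inner_def mult.assoc)
  also have "\<dots> = (\<Sum>i\<in>{1..M}. a i \<tau> * L2inner (sine_sum M (\<lambda>j. c j \<tau>)) (\<lambda>y. hb i y * hcos k y))"
    by (subst L2inner_sine_sum_left) (auto intro!: continuous_intros simp: L2inner_def ac_simps)
  also have "\<dots> = (\<Sum>i\<in>{1..M}. a i \<tau> * (\<Sum>j\<in>{1..M}. c j \<tau> * integral {0..1} (\<lambda>y. hb j y * (hb i y * hcos k y))))"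
    by (subst L2inner_sine_sum_left) (auto intro!: continuous_intros simp: L2inner_def)
  finally show ?thesis unfolding Bcoeff_def L2inner_Bnl_hb by simp
qed

lemma continuous_on_Bcoeff:
  assumes "\<And>j. j \<in> {1..M} \<Longrightarrow> continuous_on S (a j)" "\<And>j. j \<in> {1..M} \<Longrightarrow> continuous_on S (c j)"
  shows "continuous_on S (Bcoeff M a c k)"
  unfolding Bcoeff_eq_bilinear_sum[abs_def] using assms by (intro continuous_intros) auto

definition Duhamel_const :: "real \<Rightarrow> real" where
  "Duhamel_const \<alpha> = 2 * sqrt 2 * (1 / (1 - \<alpha>) + 2)"


lemma min_powr_neg_le:
  fixes x \<tau> T \<alpha> :: real
  assumes x: "0 < x" "x \<le> T" and T: "1 \<le> T" and \<tau>: "0 < \<tau>" "\<tau> \<le> 1" and \<alpha>: "0 \<le> \<alpha>" "\<alpha> \<le> 1"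
  shows "(min x \<tau>) powr (- \<alpha>) \<le> T powr \<alpha> / \<tau> * x powr (- \<alpha>)"
proof (cases "x \<le> \<tau>")
  case True
  have "1 \<le> T powr \<alpha> / \<tau>"
    using T \<tau> \<alpha> ge_one_powr_ge_zero[of T \<alpha>] by (simp add: field_simps)
  then have "1 * x powr (- \<alpha>) \<le> T powr \<alpha> / \<tau> * x powr (- \<alpha>)"
    by (intro mult_right_mono) auto
  then show ?thesis using True by simp
next
  case False
  have "\<tau> powr (- \<alpha>) = (1 / \<tau>) powr \<alpha>" using \<tau> by (simp add: powr_minus_divide powr_divide)
  also have "\<dots> \<le> (1 / \<tau>) powr 1" using \<tau> \<alpha> by (intro powr_mono) auto
  also have "\<dots> \<le> 1 / \<tau> * (T powr \<alpha> * x powr (- \<alpha>))"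
  proof -
    have "x powr \<alpha> \<le> T powr \<alpha>" using x \<alpha> by (intro powr_mono2) auto
    then have "1 \<le> T powr \<alpha> * x powr (- \<alpha>)" using x by (simp add: powr_minus field_simps)
    then show ?thesis using \<tau> divide_right_mono[of 1 "T powr \<alpha> * x powr (- \<alpha>)" \<tau>] by simp
  qed
  finally show ?thesis using False by simp
qed

lemma Duhamel_const_ge_1:
  assumes "\<alpha> < 1" shows "Duhamel_const \<alpha> \<ge> 1"
proof -
  have "2 * 1 * (0 + 2) \<le> 2 * sqrt 2 * (1 / (1 - \<alpha>) + 2)"
    using assms by (intro mult_mono add_mono) auto
  then show ?thesis by (simp add: Duhamel_const_def)
qed

definition smoothing_const :: "real \<Rightarrow> real \<Rightarrow> real \<Rightarrow> real \<Rightarrow> real" where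
  "smoothing_const \<alpha> \<delta> \<epsilon> T =
     16 * (Duhamel_const \<alpha>)^2 * ((Sobolev_const \<delta>)^2 + 1) * exp (T / (2 * \<epsilon>^2)) * (max 1 T) powr \<alpha>"

lemma smoothing_const_pos: "\<alpha> < 1 \<Longrightarrow> smoothing_const \<alpha> \<delta> \<epsilon> T > 0"
  unfolding smoothing_const_def using Duhamel_const_ge_1[of \<alpha>] by (simp add: add_nonneg_pos)

lemma short_time_threshold:
  fixes D K :: real
  assumes D: "D \<ge> 1" and K: "K \<ge> 0"
  defines "\<tau> \<equiv> 1 / (4 * D^2 * (K + 1)^2)"
  shows "0 < \<tau>" "\<tau> \<le> 1" "D * K * sqrt \<tau> \<le> 1/2" "1 / \<tau> \<le> 8 * D^2 * (K^2 + 1)"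
proof -
  have "1 * 1 \<le> D^2 * (K + 1)^2" using D K by (intro mult_mono) (auto simp: one_le_power)
  then show "0 < \<tau>" "\<tau> \<le> 1" by (auto simp: \<tau>_def)
  have "sqrt \<tau> = 1 / (2 * D * (K + 1))"
    using D K by (simp add: \<tau>_def real_sqrt_divide real_sqrt_mult)
  moreover have "0 < 2 * D * (K + 1)" using D K by simp
  ultimately show "D * K * sqrt \<tau> \<le> 1/2" using D by (simp add: pos_divide_le_eq algebra_simps)
  have "(K + 1)^2 \<le> 2 * (K^2 + 1)"
    using sum_squares_bound[of K 1] by (simp add: power2_eq_square algebra_simps)
  then show "1 / \<tau> \<le> 8 * D^2 * (K^2 + 1)"
    using mult_left_mono[of "(K + 1)^2" "2 * (K^2 + 1)" "4 * D^2"] by (simp add: \<tau>_def algebra_simps)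
qed

lemma smoothing_const_bound:
  assumes \<alpha>: "0 \<le> \<alpha>" "\<alpha> < 1" and x: "0 < x" "x \<le> T" and \<tau>: "0 < \<tau>" "\<tau> \<le> 1"
    and \<tau>_inv: "1 / \<tau> \<le> 8 * (Duhamel_const \<alpha>)^2 * ((Sobolev_const \<delta>)^2 + 1) * (S + 1)" and H: "H \<ge> 0"
  shows "2 * H * (min x \<tau>) powr (- \<alpha>) * exp (e + x / (2 * \<epsilon>^2))
         \<le> H * (smoothing_const \<alpha> \<delta> \<epsilon> T / x powr \<alpha> * exp e * (S + 1))"
proof -
  define B where "B = 8 * (Duhamel_const \<alpha>)^2 * ((Sobolev_const \<delta>)^2 + 1) * (S + 1)"
  have "0 < 1 / \<tau>" using \<tau> by simp
  with \<tau>_inv have B: "B > 0" unfolding B_def by linarith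
  have "(min x \<tau>) powr (- \<alpha>) \<le> (max 1 T) powr \<alpha> / \<tau> * x powr (- \<alpha>)"
    using x \<tau> \<alpha> by (intro min_powr_neg_le) auto
  also have "\<dots> \<le> (max 1 T) powr \<alpha> * B * x powr (- \<alpha>)"
    using mult_left_mono[OF \<tau>_inv, of "(max 1 T) powr \<alpha>"] by (intro mult_right_mono) (auto simp: B_def)
  finally have "2 * H * (min x \<tau>) powr (- \<alpha>) * exp (e + x / (2 * \<epsilon>^2))
      \<le> 2 * H * ((max 1 T) powr \<alpha> * B * x powr (- \<alpha>)) * exp (e + T / (2 * \<epsilon>^2))"
    using H x B by (intro mult_mono mult_left_mono) (auto simp: divide_right_mono)
  also have "\<dots> = H * (smoothing_const \<alpha> \<delta> \<epsilon> T / x powr \<alpha> * exp e * (S + 1))"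
    unfolding smoothing_const_def B_def by (simp add: exp_add powr_minus field_simps)
  finally show ?thesis .
qed

text \<open>\<open>a\<close> and \<open>c\<close> are the sine coefficients of the Galerkin solution \<open>X\<close> and of the solution
  \<open>\<eta>\<close> of the linearised equation started at time \<open>s\<close>.\<close>

locale linearized_coeffs =
  fixes M :: nat and s :: real and a c :: "nat \<Rightarrow> real \<Rightarrow> real"
  assumes coeff_deriv: "\<And>k \<tau>. k \<in> {1..M} \<Longrightarrow> \<tau> \<ge> s \<Longrightarrow>
      (c k has_real_derivative (- eigval k * c k \<tau> + 2 * Bcoeff M a c k \<tau>)) (at \<tau> within {s..})"
    and continuous_on_a: "\<And>j. j \<in> {1..M} \<Longrightarrow> continuous_on {s..} (a j)"
begin

lemma continuous_on_c: "k \<in> {1..M} \<Longrightarrow> continuous_on {s..} (c k)"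
  unfolding continuous_on_eq_continuous_within using coeff_deriv DERIV_continuous by blast

lemma continuous_on_Bcoeff_ac: "continuous_on {s..} (Bcoeff M a c k)"
  by (intro continuous_on_Bcoeff continuous_on_a continuous_on_c)

lemma norm_growth:
  assumes \<epsilon>: "\<epsilon> > 0" and "s \<le> u" "u \<le> t"
  shows "L2_set (\<lambda>k. c k t) {1..M} \<le> L2_set (\<lambda>k. c k u) {1..M}
           * exp (\<epsilon> / 2 * integral {u..t} (\<lambda>\<tau>. \<Sum>k\<in>{1..M}. eigval k * (a k \<tau>)^2) + (t - u) / (2 * \<epsilon>^2))"
proof -
  have "(\<Sum>k\<in>{1..M}. (c k t)^2) \<le> (\<Sum>k\<in>{1..M}. (c k u)^2)
           * exp (integral {u..t} (\<lambda>\<tau>. \<epsilon> * (\<Sum>k\<in>{1..M}. eigval k * (a k \<tau>)^2) + 1 / \<epsilon>^2))"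
  proof (rule Gronwall_differential[OF \<open>u \<le> t\<close>])
    fix \<tau> assume \<tau>: "\<tau> \<in> {u..t}"
    have c': "(c k has_real_derivative (- eigval k * c k \<tau> + 2 * Bcoeff M a c k \<tau>)) (at \<tau> within {u..t})"
      if "k \<in> {1..M}" for k
      using \<open>s \<le> u\<close> \<tau> by (intro DERIV_subset[OF coeff_deriv[OF that]]) auto
    show "((\<lambda>\<tau>. \<Sum>k\<in>{1..M}. (c k \<tau>)^2) has_real_derivative
        (\<Sum>k\<in>{1..M}. 2 * c k \<tau> * (- eigval k * c k \<tau> + 2 * Bcoeff M a c k \<tau>))) (at \<tau> within {u..t})"
      by (rule DERIV_sum) (rule derivative_eq_intros c' refl | simp)+
    show "(\<Sum>k\<in>{1..M}. 2 * c k \<tau> * (- eigval k * c k \<tau> + 2 * Bcoeff M a c k \<tau>))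
        \<le> (\<epsilon> * (\<Sum>k\<in>{1..M}. eigval k * (a k \<tau>)^2) + 1 / \<epsilon>^2) * (\<Sum>k\<in>{1..M}. (c k \<tau>)^2)"
      using energy_dissipation_bound[OF \<epsilon>, where M = M and a = "\<lambda>j. a j \<tau>" and b = "\<lambda>j. c j \<tau>"]
      by (simp add: sum_distrib_left Bcoeff_def mult.assoc)
  next
    show "continuous_on {u..t} (\<lambda>\<tau>. \<epsilon> * (\<Sum>k\<in>{1..M}. eigval k * (a k \<tau>)^2) + 1 / \<epsilon>^2)"
      using \<open>s \<le> u\<close> by (intro continuous_intros continuous_on_subset[OF continuous_on_a]) auto
  qed
  also have "integral {u..t} (\<lambda>\<tau>. \<epsilon> * (\<Sum>k\<in>{1..M}. eigval k * (a k \<tau>)^2) + 1 / \<epsilon>^2)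
      = 2 * (\<epsilon> / 2 * integral {u..t} (\<lambda>\<tau>. \<Sum>k\<in>{1..M}. eigval k * (a k \<tau>)^2) + (t - u) / (2 * \<epsilon>^2))"
    using \<open>s \<le> u\<close> \<open>u \<le> t\<close> \<epsilon>
    by (subst integral_add)
      (auto intro!: integrable_continuous_interval continuous_intros continuous_on_subset[OF continuous_on_a]
        simp: field_simps)
  finally have "(\<Sum>k\<in>{1..M}. (c k t)^2) \<le> (\<Sum>k\<in>{1..M}. (c k u)^2)
      * (exp (\<epsilon> / 2 * integral {u..t} (\<lambda>\<tau>. \<Sum>k\<in>{1..M}. eigval k * (a k \<tau>)^2) + (t - u) / (2 * \<epsilon>^2)))^2"
    unfolding exp_double .
  from real_sqrt_le_mono[OF this] show ?thesis unfolding L2_set_def by (simp add: real_sqrt_mult)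
qed


lemma Duhamel_bootstrap_step:
  assumes \<alpha>: "0 \<le> \<alpha>" "\<alpha> < 1" and r: "s < r"
    and K: "\<And>\<rho> y. \<rho> \<in> {s..r} \<Longrightarrow> y \<in> {0..1} \<Longrightarrow> \<bar>sine_sum M (\<lambda>j. a j \<rho>) y\<bar> \<le> K"
    and \<phi>: "\<phi> \<ge> 0" "\<And>\<rho>. s < \<rho> \<Longrightarrow> \<rho> < r \<Longrightarrow> (\<rho> - s) powr \<alpha> * L2_set (\<lambda>k. c k \<rho>) {1..M} \<le> \<phi>"
  shows "(r - s) powr \<alpha> * L2_set (\<lambda>k. c k r) {1..M}
         \<le> L2_set (\<lambda>k. (pi * real k) powr (2 * - \<alpha>) * c k s) {1..M} + Duhamel_const \<alpha> * K * sqrt (r - s) * \<phi>"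
proof -
  define H where "H = L2_set (\<lambda>k. (pi * real k) powr (2 * - \<alpha>) * c k s) {1..M}"
  define G where "G \<rho> = L2_set (\<lambda>k. 2 * exp (- eigval k * (r - \<rho>)) * Bcoeff M a c k \<rho>) {1..M}" for \<rho>
  have K0: "K \<ge> 0" using K[of s 0] r by auto
  have G: "continuous_on {s..r} G"
    unfolding G_def L2_set_def by (intro continuous_intros continuous_on_subset[OF continuous_on_Bcoeff_ac]) auto
  have "L2_set (\<lambda>k. c k r) {1..M} \<le> L2_set (\<lambda>k. exp (- eigval k * (r - s)) * c k s) {1..M} + integral {s..r} G"
    unfolding G_def
  proof (rule Duhamel_L2_set[OF r])
    fix k \<tau> assume "k \<in> {1..M}" "\<tau> \<in> {s..r}"
    then show "(c k has_real_derivative (- eigval k * c k \<tau> + 2 * Bcoeff M a c k \<tau>)) (at \<tau> within {s..r})"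
      by (intro DERIV_subset[OF coeff_deriv]) auto
  qed (auto intro: continuous_on_subset[OF continuous_on_Bcoeff_ac])
  moreover have "L2_set (\<lambda>k. exp (- eigval k * (r - s)) * c k s) {1..M} \<le> (r - s) powr (- \<alpha>) * H"
    unfolding H_def using r \<alpha> by (intro heat_smoothing) auto
  ultimately have "(r - s) powr \<alpha> * L2_set (\<lambda>k. c k r) {1..M} \<le> (r - s) powr \<alpha> * ((r - s) powr (- \<alpha>) * H + integral {s..r} G)"
    by (intro mult_left_mono) auto
  also have "\<dots> = H + (r - s) powr \<alpha> * integral {s..r} G"
    using r by (simp add: algebra_simps powr_minus)
  finally have Duhamel: "(r - s) powr \<alpha> * L2_set (\<lambda>k. c k r) {1..M} \<le> H + (r - s) powr \<alpha> * integral {s..r} G" .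
  have "(r - s) powr \<alpha> * integral {s..r} G \<le> 2 * (1 / (1 - \<alpha>) + 2) * (sqrt 2 * K * \<phi>) * sqrt (r - s)"
  proof (rule singular_integral_bound[OF r \<alpha> _ G])
    fix \<rho> assume \<rho>: "s < \<rho>" "\<rho> < r"
    have "G \<rho> \<le> sqrt (2 / (r - \<rho>)) * K * L2_set (\<lambda>k. c k \<rho>) {1..M}"
      unfolding G_def Bcoeff_def using \<rho> K by (intro heat_Bnl_coeffs_bound) auto
    also have "\<dots> \<le> sqrt (2 / (r - \<rho>)) * K * (\<phi> * (\<rho> - s) powr (- \<alpha>))"
      using \<phi>(2)[OF \<rho>] \<rho> K0 by (intro mult_left_mono) (auto simp: powr_minus field_simps)
    also have "sqrt (2 / (r - \<rho>)) = sqrt 2 * (r - \<rho>) powr (-1/2)"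
      using \<rho> by (simp add: powr_minus_divide powr_half_sqrt real_sqrt_divide)
    finally show "G \<rho> \<le> sqrt 2 * K * \<phi> * (r - \<rho>) powr (-1/2) * (\<rho> - s) powr (- \<alpha>)"
      by (simp add: ac_simps)
  qed (use K0 \<phi> in auto)
  also have "\<dots> = Duhamel_const \<alpha> * K * sqrt (r - s) * \<phi>"
    unfolding Duhamel_const_def by (simp only: ac_simps)
  finally show ?thesis using Duhamel unfolding H_def by linarith
qed

text \<open>On a short interval the weighted norm \<open>(r - s)\<^sup>\<alpha> \<parallel>\<eta>(r)\<parallel>\<close> is bounded by twice its initial
  datum: its supremum \<open>\<phi>\<close> satisfies \<open>\<phi> \<le> \<parallel>(-A)\<^bsup>-\<alpha>\<^esup>h\<parallel> + \<phi>/2\<close> by the previous step.\<close>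

lemma short_time_smoothing:
  assumes \<alpha>: "0 \<le> \<alpha>" "\<alpha> < 1" and \<tau>: "0 < \<tau>"
    and K: "K \<ge> 0" "\<And>\<rho> y. \<rho> \<in> {s..s + \<tau>} \<Longrightarrow> y \<in> {0..1} \<Longrightarrow> \<bar>sine_sum M (\<lambda>j. a j \<rho>) y\<bar> \<le> K"
    and small: "Duhamel_const \<alpha> * K * sqrt \<tau> \<le> 1/2"
    and r: "s < r" "r \<le> s + \<tau>"
  shows "(r - s) powr \<alpha> * L2_set (\<lambda>k. c k r) {1..M} \<le> 2 * L2_set (\<lambda>k. (pi * real k) powr (2 * - \<alpha>) * c k s) {1..M}"
proof -
  define H where "H = L2_set (\<lambda>k. (pi * real k) powr (2 * - \<alpha>) * c k s) {1..M}"
  define w where "w \<rho> = (\<rho> - s) powr \<alpha> * L2_set (\<lambda>k. c k \<rho>) {1..M}" for \<rho>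
  define \<phi> where "\<phi> = (SUP \<rho>\<in>{s<..s + \<tau>}. w \<rho>)"
  have "continuous_on {s..s + \<tau>} (\<lambda>\<rho>. L2_set (\<lambda>k. c k \<rho>) {1..M})"
    unfolding L2_set_def by (intro continuous_intros continuous_on_subset[OF continuous_on_c]) auto
  then obtain B where B: "\<And>\<rho>. \<rho> \<in> {s..s + \<tau>} \<Longrightarrow> L2_set (\<lambda>k. c k \<rho>) {1..M} \<le> B"
    using compact_continuous_image[OF _ compact_Icc] by (metis bounded_imp_bdd_above bdd_above.E compact_imp_bounded imageI)
  have "bdd_above (w ` {s<..s + \<tau>})"
  proof (rule bdd_aboveI2)
    fix \<rho> assume \<rho>: "\<rho> \<in> {s<..s + \<tau>}"
    then have "(\<rho> - s) powr \<alpha> \<le> \<tau> powr \<alpha>" using \<alpha> by (intro powr_mono2) auto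
    then show "w \<rho> \<le> \<tau> powr \<alpha> * B" unfolding w_def using B[of \<rho>] \<rho> by (intro mult_mono) auto
  qed
  then have w_le: "w \<rho> \<le> \<phi>" if "\<rho> \<in> {s<..s + \<tau>}" for \<rho>
    unfolding \<phi>_def using that by (intro cSUP_upper)
  have "w (s + \<tau>) \<le> \<phi>" using \<tau> by (intro w_le) auto
  moreover have "0 \<le> w (s + \<tau>)" by (simp add: w_def)
  ultimately have \<phi>0: "\<phi> \<ge> 0" by linarith
  have "w \<rho> \<le> H + \<phi> / 2" if \<rho>: "\<rho> \<in> {s<..s + \<tau>}" for \<rho>
  proof -
    have "(\<rho>' - s) powr \<alpha> * L2_set (\<lambda>k. c k \<rho>') {1..M} \<le> \<phi>" if "s < \<rho>'" "\<rho>' < \<rho>" for \<rho>'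
      using that \<rho> w_le[of \<rho>'] by (simp add: w_def)
    then have "w \<rho> \<le> H + Duhamel_const \<alpha> * K * sqrt (\<rho> - s) * \<phi>"
      unfolding w_def H_def using \<rho> \<phi>0 K(2) by (intro Duhamel_bootstrap_step[OF \<alpha>]) auto
    also have "Duhamel_const \<alpha> * K * sqrt (\<rho> - s) * \<phi> \<le> (1/2) * \<phi>"
    proof (intro mult_right_mono \<phi>0 order_trans[OF _ small] mult_left_mono)
      show "sqrt (\<rho> - s) \<le> sqrt \<tau>" using \<rho> by simp
    qed (use K Duhamel_const_ge_1[of \<alpha>] \<alpha> in auto)
    finally show ?thesis by simp
  qed
  then have "\<phi> \<le> H + \<phi> / 2"
    unfolding \<phi>_def using \<tau> by (intro cSUP_least) auto
  then show ?thesis using w_le[of r] r unfolding w_def H_def by simp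
qed

text \<open>Smoothing up to time \<open>s + \<tau>\<close>, followed by the energy estimate.\<close>

lemma norm_bound_short_then_long:
  assumes \<alpha>: "0 \<le> \<alpha>" "\<alpha> < 1" and \<epsilon>: "\<epsilon> > 0" and st: "s < t"
    and K: "K \<ge> 0" "\<And>\<rho> y. \<rho> \<in> {s..t} \<Longrightarrow> y \<in> {0..1} \<Longrightarrow> \<bar>sine_sum M (\<lambda>j. a j \<rho>) y\<bar> \<le> K"
    and \<tau>: "0 < \<tau>" "Duhamel_const \<alpha> * K * sqrt \<tau> \<le> 1/2"
  shows "L2_set (\<lambda>k. c k t) {1..M}
         \<le> 2 * L2_set (\<lambda>k. (pi * real k) powr (2 * - \<alpha>) * c k s) {1..M} * (min (t - s) \<tau>) powr (- \<alpha>)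
           * exp (\<epsilon> * integral {s..t} (\<lambda>r. \<Sum>k\<in>{1..M}. eigval k * (a k r)^2) + (t - s) / (2 * \<epsilon>^2))"
proof -
  define H where "H = L2_set (\<lambda>k. (pi * real k) powr (2 * - \<alpha>) * c k s) {1..M}"
  define nrm where "nrm \<rho> = L2_set (\<lambda>k. c k \<rho>) {1..M}" for \<rho>
  define A where "A r = (\<Sum>k\<in>{1..M}. eigval k * (a k r)^2)" for r
  define u where "u = s + min (t - s) \<tau>"
  have u: "s < u" "u \<le> t" "u - s = min (t - s) \<tau>" using st \<tau> by (auto simp: u_def)
  have "(u - s) powr \<alpha> * nrm u \<le> 2 * H"
    unfolding nrm_def H_def
  proof (rule short_time_smoothing[OF \<alpha>, of "u - s" K])
    show "Duhamel_const \<alpha> * K * sqrt (u - s) \<le> 1/2"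
      using u K(1) Duhamel_const_ge_1[OF \<alpha>(2)] by (intro order_trans[OF _ \<tau>(2)] mult_left_mono) auto
  qed (use u K in auto)
  moreover have "(u - s) powr \<alpha> > 0" using u(1) by simp
  ultimately have "nrm u \<le> 2 * H / (u - s) powr \<alpha>" by (simp add: pos_le_divide_eq mult.commute)
  then have nrm_u: "nrm u \<le> 2 * H * (u - s) powr (- \<alpha>)" by (simp add: powr_minus divide_inverse)
  have A: "continuous_on {s..t} A" "\<And>r. A r \<ge> 0"
    unfolding A_def by (auto intro!: continuous_intros sum_nonneg continuous_on_subset[OF continuous_on_a])
  have "\<epsilon> / 2 * integral {u..t} A \<le> \<epsilon> * integral {s..t} A"
  proof -
    have "integral {u..t} A \<le> integral {s..t} A" "0 \<le> integral {s..t} A"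
      using u A by (auto intro!: integral_subset_le integral_nonneg integrable_continuous_interval
          continuous_on_subset[OF A(1)])
    then show ?thesis using \<epsilon> by (simp add: mult_left_mono)
  qed
  moreover have "(t - u) / (2 * \<epsilon>^2) \<le> (t - s) / (2 * \<epsilon>^2)" using u by (intro divide_right_mono) auto
  ultimately have "nrm t \<le> nrm u * exp (\<epsilon> * integral {s..t} A + (t - s) / (2 * \<epsilon>^2))"
    using norm_growth[OF \<epsilon>, of u t] u unfolding nrm_def A_def
    by (smt (verit) L2_set_nonneg exp_le_cancel_iff mult_left_mono)
  also have "\<dots> \<le> 2 * H * (u - s) powr (- \<alpha>) * exp (\<epsilon> * integral {s..t} A + (t - s) / (2 * \<epsilon>^2))"
    using nrm_u by (intro mult_right_mono) auto
  finally show ?thesis unfolding nrm_def H_def A_def u(3) .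
qed

lemma smoothing_estimate:
  assumes \<alpha>: "0 \<le> \<alpha>" "\<alpha> < 1" and \<delta>: "\<delta> > 0" and \<epsilon>: "\<epsilon> > 0" and st: "s < t" "t - s \<le> T"
    and h: "L2norm (fracA (- \<alpha>) (sine_sum M (\<lambda>k. c k s))) > 0"
  shows "L2norm (sine_sum M (\<lambda>k. c k t)) / L2norm (fracA (- \<alpha>) (sine_sum M (\<lambda>k. c k s)))
     \<le> smoothing_const \<alpha> \<delta> \<epsilon> T / (t - s) powr \<alpha>
        * exp (\<epsilon> * integral {s..t} (\<lambda>r. (L2norm (grad (sine_sum M (\<lambda>j. a j r))))^2))
        * ((SUP r\<in>{s..t}. (L2norm (fracA (1/4 + \<delta>) (sine_sum M (\<lambda>j. a j r))))^2) + 1)"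
proof -
  define H where "H = L2norm (fracA (- \<alpha>) (sine_sum M (\<lambda>k. c k s)))"
  define F where "F r = (L2norm (fracA (1/4 + \<delta>) (sine_sum M (\<lambda>j. a j r))))^2" for r
  define S where "S = (SUP r\<in>{s..t}. F r)"
  define IA where "IA = integral {s..t} (\<lambda>r. (L2norm (grad (sine_sum M (\<lambda>j. a j r))))^2)"
  define K where "K = Sobolev_const \<delta> * sqrt S"
  define \<tau> where "\<tau> = 1 / (4 * (Duhamel_const \<alpha>)^2 * (K + 1)^2)"
  have "continuous_on {s..t} F"
    unfolding F_def fracA_sine_sum L2norm_sine_sum L2_set_def
    by (intro continuous_intros continuous_on_subset[OF continuous_on_a]) auto
  then have "bdd_above (F ` {s..t})"
    by (intro bounded_imp_bdd_above compact_imp_bounded compact_continuous_image) auto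
  then have FS: "F r \<le> S" if "r \<in> {s..t}" for r
    unfolding S_def using that by (intro cSUP_upper)
  have S0: "S \<ge> 0" using FS[of s] st by (simp add: F_def order_trans[OF zero_le_power2])
  have K: "K \<ge> 0" using Sobolev_const_nonneg[OF \<delta>] S0 by (simp add: K_def)
  have Kbound: "\<bar>sine_sum M (\<lambda>j. a j \<rho>) y\<bar> \<le> K" if "\<rho> \<in> {s..t}" for \<rho> y
  proof -
    have "L2norm (fracA (1/4 + \<delta>) (sine_sum M (\<lambda>j. a j \<rho>))) \<le> sqrt S"
      using FS[OF that] by (simp add: F_def real_le_rsqrt)
    then show ?thesis
      using abs_sine_sum_le_Sobolev[OF \<delta>, of M "\<lambda>j. a j \<rho>" y] Sobolev_const_nonneg[OF \<delta>]
      unfolding K_def by (meson mult_left_mono order_trans)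
  qed
  note \<tau> = short_time_threshold[OF Duhamel_const_ge_1[OF \<alpha>(2)] K, folded \<tau>_def]
  have "K^2 + 1 \<le> ((Sobolev_const \<delta>)^2 + 1) * (S + 1)"
    using S0 by (simp add: K_def power_mult_distrib algebra_simps)
  then have "8 * (Duhamel_const \<alpha>)^2 * (K^2 + 1) \<le> 8 * (Duhamel_const \<alpha>)^2 * (((Sobolev_const \<delta>)^2 + 1) * (S + 1))"
    by (rule mult_left_mono) simp
  with \<tau>(4) have \<tau>_inv: "1 / \<tau> \<le> 8 * (Duhamel_const \<alpha>)^2 * ((Sobolev_const \<delta>)^2 + 1) * (S + 1)"
    by (simp add: mult.assoc)
  have "L2norm (sine_sum M (\<lambda>k. c k t))
      \<le> 2 * H * (min (t - s) \<tau>) powr (- \<alpha>) * exp (\<epsilon> * IA + (t - s) / (2 * \<epsilon>^2))"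
    using norm_bound_short_then_long[OF \<alpha> \<epsilon> st(1) K Kbound \<tau>(1,3)]
    by (simp add: H_def IA_def L2norm_sine_sum fracA_sine_sum L2norm_grad_sine_sum_sq)
  also have "\<dots> \<le> H * (smoothing_const \<alpha> \<delta> \<epsilon> T / (t - s) powr \<alpha> * exp (\<epsilon> * IA) * (S + 1))"
    using st \<tau>(1,2) \<tau>_inv h unfolding H_def by (intro smoothing_const_bound[OF \<alpha>]) auto
  finally have "L2norm (sine_sum M (\<lambda>k. c k t)) / H
      \<le> smoothing_const \<alpha> \<delta> \<epsilon> T / (t - s) powr \<alpha> * exp (\<epsilon> * IA) * (S + 1)"
    using h by (simp add: H_def pos_divide_le_eq mult.commute)
  then show ?thesis unfolding H_def IA_def S_def F_def .
qed

end


lemma linearized_coeffs_of_solution: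
  assumes X: "HM_path_cont M {0..} Xp" and s: "0 \<le> s" and \<eta>: "linearized_solution M Xp s h \<eta>"
  shows "linearized_coeffs M s (\<lambda>j r. L2inner (Xp r) (hb j)) (\<lambda>j \<tau>. L2inner (\<eta> \<tau>) (hb j))"
proof
  define a where "a j r = L2inner (Xp r) (hb j)" for j r
  define c where "c j \<tau> = L2inner (\<eta> \<tau>) (hb j)" for j \<tau>
  fix k \<tau> assume k: "k \<in> {1..M}" and \<tau>: "\<tau> \<ge> s"
  have X\<eta>: "Xp \<tau> = sine_sum M (\<lambda>j. a j \<tau>)" "\<eta> \<tau> = sine_sum M (\<lambda>j. c j \<tau>)"
    using X \<eta> s \<tau> unfolding a_def c_def HM_path_cont_def linearized_solution_def
    by (auto intro!: HM_eq_sine_sum_coeffs)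
  have "(\<lambda>y. Adir (\<eta> \<tau>) y + 2 * BM M (Xp \<tau>) (\<eta> \<tau>) y)
      = sine_sum M (\<lambda>k. - eigval k * c k \<tau> + 2 * Bcoeff M a c k \<tau>)"
    unfolding X\<eta> Adir_sine_sum BM_def PM_sine_sum by (simp add: PM_eq_sine_sum Bcoeff_def sine_sum_add_scaled)
  with k \<tau> \<eta> show "((\<lambda>\<tau>. L2inner (\<eta> \<tau>) (hb k)) has_real_derivative
      - eigval k * L2inner (\<eta> \<tau>) (hb k) + 2 * Bcoeff M (\<lambda>j r. L2inner (Xp r) (hb j)) (\<lambda>j \<tau>. L2inner (\<eta> \<tau>) (hb j)) k \<tau>)
      (at \<tau> within {s..})"
    unfolding linearized_solution_def a_def[abs_def] c_def[abs_def] by auto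
next
  fix j assume "j \<in> {1..M}"
  then show "continuous_on {s..} (\<lambda>r. L2inner (Xp r) (hb j))"
    using X s unfolding HM_path_cont_def by (auto intro: continuous_on_subset)
qed

lemma pathwise_smoothing_estimate:
  assumes X: "HM_path_cont M {0..} Xp" and \<eta>: "linearized_solution M Xp s h \<eta>" and h: "h \<noteq> (\<lambda>_. 0)"
    and \<alpha>: "0 \<le> \<alpha>" "\<alpha> < 1" and \<delta>: "\<delta> > 0" and \<epsilon>: "\<epsilon> > 0" and st: "0 \<le> s" "s < t" "t - s \<le> T"
  shows "L2norm (\<eta> t) / L2norm (fracA (- \<alpha>) h)
         \<le> smoothing_const \<alpha> \<delta> \<epsilon> T / (t - s) powr \<alpha>
           * exp (\<epsilon> * integral {s..t} (\<lambda>r. (L2norm (grad (Xp r)))^2))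
           * ((SUP r\<in>{s..t}. (L2norm (fracA (1/4 + \<delta>) (Xp r)))^2) + 1)"
proof -
  define a where "a j r = L2inner (Xp r) (hb j)" for j r
  define c where "c j \<tau> = L2inner (\<eta> \<tau>) (hb j)" for j \<tau>
  interpret linearized_coeffs M s a c
    unfolding a_def[abs_def] c_def[abs_def] using X st(1) \<eta> by (rule linearized_coeffs_of_solution)
  have Xp: "Xp r = sine_sum M (\<lambda>j. a j r)" if "r \<in> {s..t}" for r
    using X st that unfolding a_def HM_path_cont_def by (auto intro!: HM_eq_sine_sum_coeffs)
  have \<eta>_eq: "\<eta> \<tau> = sine_sum M (\<lambda>j. c j \<tau>)" if "\<tau> \<ge> s" for \<tau>
    using \<eta> that unfolding c_def HM_path_cont_def linearized_solution_def by (auto intro!: HM_eq_sine_sum_coeffs)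
  have h_eq: "h = sine_sum M (\<lambda>j. c j s)"
    using \<eta> \<eta>_eq[of s] by (simp add: linearized_solution_def)
  have h_pos: "L2norm (fracA (- \<alpha>) h) > 0"
  proof -
    obtain j where "j \<in> {1..M}" "c j s \<noteq> 0" using h unfolding h_eq sine_sum_eq_0_iff by blast
    then show ?thesis
      by (auto simp: h_eq fracA_sine_sum L2norm_sine_sum L2_set_eq_0_iff less_le)
  qed
  have "\<eta> t = sine_sum M (\<lambda>k. c k t)" using st by (intro \<eta>_eq) auto
  moreover have "integral {s..t} (\<lambda>r. (L2norm (grad (Xp r)))^2)
      = integral {s..t} (\<lambda>r. (L2norm (grad (sine_sum M (\<lambda>j. a j r))))^2)"
    by (rule integral_cong) (simp add: Xp)
  moreover have "(SUP r\<in>{s..t}. (L2norm (fracA (1/4 + \<delta>) (Xp r)))^2)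
      = (SUP r\<in>{s..t}. (L2norm (fracA (1/4 + \<delta>) (sine_sum M (\<lambda>j. a j r))))^2)"
    by (rule SUP_cong) (simp_all add: Xp)
  ultimately show ?thesis
    using smoothing_estimate[OF \<alpha> \<delta> \<epsilon> st(2,3)] h_pos unfolding h_eq by simp
qed

theorem lemma4p3:
  fixes P :: "'w measure"
    and W :: "nat \<Rightarrow> real \<Rightarrow> 'w \<Rightarrow> real"
    and e :: "nat \<Rightarrow> real \<Rightarrow> real" and q :: "nat \<Rightarrow> real"
    and X :: "nat \<Rightarrow> (real \<Rightarrow> real) \<Rightarrow> real \<Rightarrow> 'w \<Rightarrow> (real \<Rightarrow> real)"
    and T \<alpha> \<delta> \<epsilon> :: real
  assumes T: "0 < T"
    and BMs: "indep_std_BMs P W"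
    and Q: "trace_class_eigen e q"
    and Xsol: "\<And>M x. x \<in> HM M \<Longrightarrow> AE \<omega> in P. galerkin_solution M e q W x (X M x) \<omega>"
    and \<alpha>: "0 \<le> \<alpha>" "\<alpha> < 1"
    and \<delta>: "0 < \<delta>" and \<epsilon>: "0 < \<epsilon>"
  shows "\<exists>C>0. \<forall>M x h s t. x \<in> HM M \<and> h \<in> HM M \<and> h \<noteq> (\<lambda>_. 0) \<and> 0 \<le> s \<and> s < t \<and> t \<le> T \<longrightarrow>
     (AE \<omega> in P. \<forall>\<eta>. linearized_solution M (\<lambda>r. X M x r \<omega>) s h \<eta> \<longrightarrow>
        L2norm (\<eta> t) / L2norm (fracA (- \<alpha>) h)
        \<le> C / (t - s) powr \<alpha>
          * exp (\<epsilon> * integral {s..t} (\<lambda>r. (L2norm (grad (X M x r \<omega>)))^2))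
          * ((SUP r\<in>{s..t}. (L2norm (fracA (1/4 + \<delta>) (X M x r \<omega>)))^2) + 1))"
proof (intro exI[of _ "smoothing_const \<alpha> \<delta> \<epsilon> T"] conjI allI impI)
  \<comment> \<open>The estimate is pathwise: the noise only enters through the existence of \<open>X\<close>.\<close>
  show "smoothing_const \<alpha> \<delta> \<epsilon> T > 0" using \<alpha>(2) by (rule smoothing_const_pos)
  fix M x h s t
  assume "x \<in> HM M \<and> h \<in> HM M \<and> h \<noteq> (\<lambda>_. 0) \<and> 0 \<le> s \<and> s < t \<and> t \<le> T"
  then have x: "x \<in> HM M" and h: "h \<noteq> (\<lambda>_. 0)" and st: "0 \<le> s" "s < t" "t - s \<le> T" by auto
  show "AE \<omega> in P. \<forall>\<eta>. linearized_solution M (\<lambda>r. X M x r \<omega>) s h \<eta> \<longrightarrow>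
        L2norm (\<eta> t) / L2norm (fracA (- \<alpha>) h)
        \<le> smoothing_const \<alpha> \<delta> \<epsilon> T / (t - s) powr \<alpha>
          * exp (\<epsilon> * integral {s..t} (\<lambda>r. (L2norm (grad (X M x r \<omega>)))^2))
          * ((SUP r\<in>{s..t}. (L2norm (fracA (1/4 + \<delta>) (X M x r \<omega>)))^2) + 1)"
    using Xsol[OF x]
  proof (rule AE_mp, intro AE_I2 impI allI)
    fix \<omega> \<eta>
    assume "galerkin_solution M e q W x (X M x) \<omega>" and "linearized_solution M (\<lambda>r. X M x r \<omega>) s h \<eta>"
    then show "L2norm (\<eta> t) / L2norm (fracA (- \<alpha>) h)
        \<le> smoothing_const \<alpha> \<delta> \<epsilon> T / (t - s) powr \<alpha>
          * exp (\<epsilon> * integral {s..t} (\<lambda>r. (L2norm (grad (X M x r \<omega>)))^2))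
          * ((SUP r\<in>{s..t}. (L2norm (fracA (1/4 + \<delta>) (X M x r \<omega>)))^2) + 1)"
      using h \<alpha> \<delta> \<epsilon> st unfolding galerkin_solution_def by (intro pathwise_smoothing_estimate) auto
  qed
qed

end
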